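(* (1) $\mathrm{PRT}\subset\mathrm{PRT[O]}\subset\mathrm{PRT[T,O]}$; (2) $\mathrm{PRT}\subset\mathrm{PRT[T]}\subset\mathrm{PRT[T,O]}$; (3) $\mathrm{PRT[O]}\setminus\mathrm{PRT[T]}\neq\emptyset$; (4) $\mathrm{PRT[T]}\setminus\mathrm{PRT[O]}\neq\emptyset$. Here $\subset$ denotes proper inclusion.
   Context: An indexed family is a sequence $\mathcal F=(F_n)_{n\in\mathbb N}$ of subsets of $\mathbb N$ that is uniformly computably enumerable; $F\in\mathcal F$ means $F=F_n$ for some $n$, and $\mathrm{mi}_{\mathcal F}(F)$ is the least $n$ with $F_n=F$. An enumeration of a nonempty set $A$ is an infinite sequence of elements of $A$ in which every element of $A$ occurs; $f\restriction n$ is its initial segment of length $n$, and $\mathrm{content}(\sigma)$ is the set of entries of a finite string $\sigma$. A learner is a partial computable function from finite strings of naturals to naturals; hypothesis $h$ is interpreted as $F_h$. $M$ converges to a correct index on an enumeration $f$ of $F$ if there is $i$ with $M(f\restriction j)=M(f\restriction i)$ for all $j\ge i$ and $F_{M(f\restriction i)}=F$. $\mathcal F$ is PRT-learnable if there are a learner $M$ and a polynomial $p$ such that for every $F\in\mathcal F$ and every enumeration $f$ of $F$, $M$ converges to a correct index on $f$ in fewer than $p(\mathrm{mi}_{\mathcal F}(F))$ computation steps, with the number of oracle queries (if an oracle is used) also bounded by $p(\mathrm{mi}_{\mathcal F}(F))$. A teacher is a computable map $T$ on finite strings with $T(\sigma)$ a prefix of $T(\tau)$ whenever $\sigma$ is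 a prefix of $\tau$, and $\mathrm{content}(T(\sigma))\subseteq\mathrm{content}(\sigma)$. PRT[O]-learnable: some learner with a membership oracle for the target set PRT-learns $\mathcal F$. PRT[T]-learnable: there is a learner-teacher pair $(M,T)$ such that $M$, fed $T(f\restriction n)$ in place of $f\restriction n$, meets the PRT criterion for every enumeration $f$ of every member of $\mathcal F$, counting only the learner's computation. PRT[T,O]-learnable: as for PRT[T], but $M$ additionally has a membership oracle for the target and $T$ has access to the oracle answers $M$ receives. PRT, PRT[O], PRT[T], PRT[T,O] denote the corresponding classes of indexed families. *)

theory Defs
  imports Main "HOL-Computational_Algebra.Polynomial" "HOL-Library.Sublist"
begin

datatype instr =
    Inc nat
  | Dec nat
  | Add nat nat nat
  | Sub nat nat nat
  | Jz nat nat
  | Len nat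
  | Rd nat nat
  | Out nat
  | Qry nat nat

type_synonym prog = "instr list"

record cfg =
  pc :: nat
  reg :: "nat \<Rightarrow> nat"
  outp :: "nat list"
  trans :: "(nat \<times> bool) list"

definition init_cfg :: cfg where
  "init_cfg = \<lparr>pc = 0, reg = (\<lambda>_. 0), outp = [], trans = []\<rparr>"

definition step :: "prog \<Rightarrow> (nat \<Rightarrow> bool) \<Rightarrow> nat list \<Rightarrow> cfg \<Rightarrow> cfg" where
  "step P A xs c =
    (if length P \<le> pc c then c else
     (case P ! pc c of
        Inc r \<Rightarrow> c\<lparr>pc := Suc (pc c), reg := (reg c)(r := reg c r + 1)\<rparr>
      | Dec r \<Rightarrow> c\<lparr>pc := Suc (pc c), reg := (reg c)(r := reg c r - 1)\<rparr>
      | Add r s t \<Rightarrow> c\<lparr>pc := Suc (pc c), reg := (reg c)(r := reg c s + reg c t)\<rparr>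
      | Sub r s t \<Rightarrow> c\<lparr>pc := Suc (pc c), reg := (reg c)(r := reg c s - reg c t)\<rparr>
      | Jz r l \<Rightarrow> c\<lparr>pc := (if reg c r = 0 then l else Suc (pc c))\<rparr>
      | Len r \<Rightarrow> c\<lparr>pc := Suc (pc c), reg := (reg c)(r := length xs)\<rparr>
      | Rd r s \<Rightarrow> c\<lparr>pc := Suc (pc c),
                   reg := (reg c)(r := (if reg c s < length xs then xs ! reg c s else 0))\<rparr>
      | Out r \<Rightarrow> c\<lparr>pc := Suc (pc c), outp := outp c @ [reg c r]\<rparr>
      | Qry r s \<Rightarrow> c\<lparr>pc := Suc (pc c),
                    reg := (reg c)(r := (if A (reg c s) then 1 else 0)),
                    trans := trans c @ [(reg c s, A (reg c s))]\<rparr>))"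

definition run :: "prog \<Rightarrow> (nat \<Rightarrow> bool) \<Rightarrow> nat list \<Rightarrow> nat \<Rightarrow> cfg" where
  "run P A xs t = (step P A xs ^^ t) init_cfg"

definition halted :: "prog \<Rightarrow> cfg \<Rightarrow> bool" where
  "halted P c \<longleftrightarrow> length P \<le> pc c"

definition defined :: "prog \<Rightarrow> (nat \<Rightarrow> bool) \<Rightarrow> nat list \<Rightarrow> bool" where
  "defined P A xs \<longleftrightarrow> (\<exists>t. halted P (run P A xs t))"

definition steps :: "prog \<Rightarrow> (nat \<Rightarrow> bool) \<Rightarrow> nat list \<Rightarrow> nat" where
  "steps P A xs = (LEAST t. halted P (run P A xs t))"

definition final :: "prog \<Rightarrow> (nat \<Rightarrow> bool) \<Rightarrow> nat list \<Rightarrow> cfg" where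
  "final P A xs = run P A xs (steps P A xs)"

definition result :: "prog \<Rightarrow> (nat \<Rightarrow> bool) \<Rightarrow> nat list \<Rightarrow> nat" where
  "result P A xs = reg (final P A xs) 0"

definition outlist :: "prog \<Rightarrow> (nat \<Rightarrow> bool) \<Rightarrow> nat list \<Rightarrow> nat list" where
  "outlist P A xs = outp (final P A xs)"

definition queries :: "prog \<Rightarrow> (nat \<Rightarrow> bool) \<Rightarrow> nat list \<Rightarrow> (nat \<times> bool) list" where
  "queries P A xs = trans (final P A xs)"

definition no_oracle :: "nat \<Rightarrow> bool" where
  "no_oracle = (\<lambda>_. False)"

definition indexed_family :: "(nat \<Rightarrow> nat set) \<Rightarrow> bool" where
  "indexed_family F \<longleftrightarrow> (\<exists>P. \<forall>n x. x \<in> F n \<longleftrightarrow> defined P no_oracle [n, x])"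

definition mi :: "(nat \<Rightarrow> nat set) \<Rightarrow> nat set \<Rightarrow> nat" where
  "mi F X = (LEAST n. F n = X)"

definition restr :: "(nat \<Rightarrow> nat) \<Rightarrow> nat \<Rightarrow> nat list" where
  "restr f n = map f [0..<n]"

definition conv_within ::
  "(nat \<Rightarrow> nat set) \<Rightarrow> prog \<Rightarrow> (nat \<Rightarrow> bool) \<Rightarrow> (nat \<Rightarrow> nat list) \<Rightarrow> nat set \<Rightarrow> nat \<Rightarrow> bool" where
  "conv_within F M A tau X b \<longleftrightarrow>
     (\<exists>i. (\<forall>j. defined M A (tau j))
        \<and> (\<forall>j\<ge>i. result M A (tau j) = result M A (tau i))
        \<and> F (result M A (tau i)) = X
        \<and> (\<Sum>j\<le>i. steps M A (tau j)) < b
        \<and> (\<Sum>j\<le>i. length (queries M A (tau j))) \<le> b)"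

definition PRT :: "(nat \<Rightarrow> nat set) set" where
  "PRT = {F. indexed_family F \<and>
     (\<exists>M p. \<forall>n f. range f = F n \<longrightarrow>
        conv_within F M no_oracle (restr f) (F n) (poly p (mi F (F n))))}"

definition PRT_O :: "(nat \<Rightarrow> nat set) set" where
  "PRT_O = {F. indexed_family F \<and>
     (\<exists>M p. \<forall>n f. range f = F n \<longrightarrow>
        conv_within F M (\<lambda>x. x \<in> F n) (restr f) (F n) (poly p (mi F (F n))))}"

definition teacher :: "prog \<Rightarrow> bool" where
  "teacher T \<longleftrightarrow>
     (\<forall>\<sigma>. defined T no_oracle \<sigma>)
   \<and> (\<forall>\<sigma> \<tau>. prefix \<sigma> \<tau> \<longrightarrow> prefix (outlist T no_oracle \<sigma>) (outlist T no_oracle \<tau>))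
   \<and> (\<forall>\<sigma>. set (outlist T no_oracle \<sigma>) \<subseteq> set \<sigma>)"

definition PRT_T :: "(nat \<Rightarrow> nat set) set" where
  "PRT_T = {F. indexed_family F \<and>
     (\<exists>M T p. teacher T \<and> (\<forall>n f. range f = F n \<longrightarrow>
        conv_within F M no_oracle (\<lambda>j. outlist T no_oracle (restr f j)) (F n)
          (poly p (mi F (F n)))))}"

text \<open>Teachers with access to the learner's oracle answers: the teacher's input is the
  string sigma together with the transcript h of oracle queries/answers, coded as a list.\<close>
definition enc :: "nat list \<Rightarrow> (nat \<times> bool) list \<Rightarrow> nat list" where
  "enc \<sigma> h = length \<sigma> # \<sigma> @ concat (map (\<lambda>(q, a). [q, if a then 1 else 0]) h)"

definition teacher_TO :: "prog \<Rightarrow> bool" where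
  "teacher_TO T \<longleftrightarrow>
     (\<forall>\<sigma> h. defined T no_oracle (enc \<sigma> h))
   \<and> (\<forall>\<sigma> \<tau> h h'. prefix \<sigma> \<tau> \<longrightarrow> prefix h h' \<longrightarrow>
        prefix (outlist T no_oracle (enc \<sigma> h)) (outlist T no_oracle (enc \<tau> h')))
   \<and> (\<forall>\<sigma> h. set (outlist T no_oracle (enc \<sigma> h)) \<subseteq> set \<sigma>)"

text \<open>History of oracle answers received by the learner before stage n of the interaction.\<close>
fun hist :: "prog \<Rightarrow> prog \<Rightarrow> (nat \<Rightarrow> bool) \<Rightarrow> (nat \<Rightarrow> nat) \<Rightarrow> nat \<Rightarrow> (nat \<times> bool) list" where
  "hist M T A f 0 = []"
| "hist M T A f (Suc n) = hist M T A f n @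
     queries M A (outlist T no_oracle (enc (restr f n) (hist M T A f n)))"

definition tinput :: "prog \<Rightarrow> prog \<Rightarrow> (nat \<Rightarrow> bool) \<Rightarrow> (nat \<Rightarrow> nat) \<Rightarrow> nat \<Rightarrow> nat list" where
  "tinput M T A f n = outlist T no_oracle (enc (restr f n) (hist M T A f n))"

definition PRT_TO :: "(nat \<Rightarrow> nat set) set" where
  "PRT_TO = {F. indexed_family F \<and>
     (\<exists>M T p. teacher_TO T \<and> (\<forall>n f. range f = F n \<longrightarrow>
        conv_within F M (\<lambda>x. x \<in> F n) (tinput M T (\<lambda>x. x \<in> F n) f) (F n)
          (poly p (mi F (F n)))))}"

end

theory Submission
  imports Defs
begin

text \<open>The inclusions are simulations. A learner that never uses its oracle still works with
  one once its queries are made harmless; the identity teacher passes the text through; and a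
  teacher becomes a teacher with access to the oracle answers by recompiling it to read \<open>\<sigma>\<close> out
  of \<open>enc \<sigma> h\<close>.

  Separation (3) uses \<open>\<nat>\<close> together with all \<open>\<nat> - {k}\<close>. With a membership oracle, a learner
  finds the missing number among those below the input length in linear time. No function at
  all identifies this family in the limit from text (Gold): either \<open>\<nat>\<close> has a locking sequence,
  which can be continued to a text for a co-singleton, or there is a text for \<open>\<nat>\<close> on which the
  learner keeps abandoning \<open>\<nat>\<close>. A teacher only filters the text, so this rules out PRT[T].

  Separation (4) uses the singletons \<open>{tower n}\<close>, \<open>tower (n + 1) = 2 ^ tower n\<close>. A teacher
  that sees \<open>x\<close> repeats it \<open>k + 1\<close> times, \<open>k\<close> least with \<open>x \<le> tower k\<close>, so the learner only
  has to output the length minus one. With an oracle instead, on the text \<open>x, x, x, \<dots>\<close> every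
  register of an additive machine after \<open>s\<close> steps on input length \<open>j\<close> has the form
  \<open>a * x + b\<close> with \<open>a \<le> 2 ^ s\<close> and \<open>\<bar>b\<bar> \<le> 2 ^ s * (j + 1)\<close>, and once \<open>x\<close> is large the run is
  determined by these pairs alone. A polynomial-time learner thus outputs \<open>a * x + b\<close> for
  both \<open>x = tower N\<close> and \<open>x = tower (N + 1)\<close>, i.e. \<open>N\<close> and \<open>N + 1\<close>, which is impossible since
  the two values differ by more than 1.\<close>

section \<open>Runs of the machine\<close>

lemma run_0 [simp]: "run P A xs 0 = init_cfg"
  by (simp add: run_def)

lemma run_Suc: "run P A xs (Suc t) = step P A xs (run P A xs t)"
  by (simp add: run_def)

lemma run_add: "run P A xs (k + t) = (step P A xs ^^ k) (run P A xs t)"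
  by (simp add: run_def funpow_add)

lemma funpow_Suc_apply: "(f ^^ Suc n) x = (f ^^ n) (f x)"
  by (induction n) auto

lemma ex_funpow_shift: "\<exists>t. P ((f ^^ t) ((f ^^ k) x)) \<Longrightarrow> \<exists>t. P ((f ^^ t) x)"
  by (metis funpow_add o_apply)

lemma step_halted: "halted P c \<Longrightarrow> step P A xs c = c"
  by (simp add: step_def halted_def)

lemma run_halted_stable:
  "halted P (run P A xs t) \<Longrightarrow> t \<le> t' \<Longrightarrow> run P A xs t' = run P A xs t"
proof (induction t')
  case (Suc t')
  show ?case
  proof (cases "t = Suc t'")
    case False
    then have "run P A xs t' = run P A xs t" using Suc by simp
    then show ?thesis using Suc step_halted by (simp add: run_Suc)
  qed simp
qed simp

lemma final_if_halted:
  assumes "halted P (run P A xs t)"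
  shows "final P A xs = run P A xs t" "steps P A xs \<le> t" "defined P A xs"
proof -
  show le: "steps P A xs \<le> t"
    unfolding steps_def using assms by (rule Least_le)
  have "halted P (run P A xs (steps P A xs))"
    unfolding steps_def using assms by (rule LeastI)
  then show "final P A xs = run P A xs t"
    unfolding final_def using run_halted_stable le by metis
  show "defined P A xs"
    using assms defined_def by blast
qed

lemma halted_final: "defined P A xs \<Longrightarrow> halted P (final P A xs)"
  unfolding defined_def final_def steps_def by (metis LeastI)

lemma steps_ge_1: "P \<noteq> [] \<Longrightarrow> defined P A xs \<Longrightarrow> 1 \<le> steps P A xs"
  using halted_final[of P A xs] unfolding final_def
  by (cases "steps P A xs") (auto simp: halted_def init_cfg_def)

lemma length_trans_run_le: "length (trans (run P A xs t)) \<le> t"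
  by (induction t) (auto simp: init_cfg_def run_Suc step_def split: instr.split)

lemma length_queries_le_steps: "length (queries P A xs) \<le> steps P A xs"
  unfolding queries_def final_def by (rule length_trans_run_le)

lemma not_defined_if_stuck:
  assumes "run P A xs t = c" "step P A xs c = c" "\<not> halted P c"
  shows "\<not> defined P A xs"
proof
  have stuck: "run P A xs (d + t) = c" for d
    using assms(1,2) by (induction d) (simp_all add: run_Suc)
  assume "defined P A xs"
  then obtain t' where "halted P (run P A xs t')"
    unfolding defined_def by blast
  moreover have "run P A xs t' = c"
    using stuck[of "t' - t"] run_halted_stable[of P A xs t' t] calculation
    by (cases "t' \<le> t") simp_all
  ultimately show False
    using assms(3) by simp
qed

lemma result_Nil: "result [] A xs = 0"
  using final_if_halted(1)[of "[]" A xs 0] by (simp add: result_def halted_def init_cfg_def)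


section \<open>Inclusions\<close>

fun mute_query :: "instr \<Rightarrow> instr" where
  "mute_query (Qry r s) = Sub r r r"
| "mute_query i = i"

definition mute_queries :: "prog \<Rightarrow> prog" where
  "mute_queries M = map mute_query M"

text \<open>An oracle-free program never gets a positive answer, so a query only clears its target
  register, which is what the replacement instruction does.\<close>

lemma run_mute_queries:
  "pc (run (mute_queries M) A xs t) = pc (run M no_oracle xs t)
   \<and> reg (run (mute_queries M) A xs t) = reg (run M no_oracle xs t)
   \<and> outp (run (mute_queries M) A xs t) = outp (run M no_oracle xs t)
   \<and> trans (run (mute_queries M) A xs t) = []"
proof (induction t)
  case (Suc t)
  show ?case
  proof (cases "length M \<le> pc (run M no_oracle xs t)")
    case True
    then show ?thesis
      using Suc by (simp add: run_Suc step_def mute_queries_def)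
  next
    case False
    then show ?thesis
      using Suc by (cases "M ! pc (run M no_oracle xs t)")
        (auto simp: run_Suc step_def mute_queries_def no_oracle_def)
  qed
qed (simp add: init_cfg_def)

lemma halted_mute_queries:
  "halted (mute_queries M) (run (mute_queries M) A xs t) = halted M (run M no_oracle xs t)"
  using run_mute_queries by (simp add: halted_def mute_queries_def)

lemma conv_within_mute_queries:
  assumes "conv_within F M no_oracle \<tau> X b"
  shows "conv_within F (mute_queries M) A \<tau> X b"
proof -
  have "steps (mute_queries M) A xs = steps M no_oracle xs"
    and "defined (mute_queries M) A xs = defined M no_oracle xs"
    and "result (mute_queries M) A xs = result M no_oracle xs"
    and "queries (mute_queries M) A xs = []" for xs
    unfolding steps_def defined_def halted_mute_queries
    by (simp_all add: result_def queries_def final_def steps_def halted_mute_queries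
      run_mute_queries)
  with assms show ?thesis
    unfolding conv_within_def by auto
qed

definition copy_prog :: prog where
  "copy_prog = [Len 1, Sub 3 1 2, Jz 3 7, Rd 4 2, Out 4, Inc 2, Jz 0 1]"

lemma copy_prog_loop:
  "pc c = 1 \<Longrightarrow> reg c 0 = 0 \<Longrightarrow> reg c 1 = length xs \<Longrightarrow> reg c 2 = length xs - k
   \<Longrightarrow> k \<le> length xs \<Longrightarrow> outp c = take (length xs - k) xs
   \<Longrightarrow> \<exists>t. halted copy_prog ((step copy_prog A xs ^^ t) c) \<and> outp ((step copy_prog A xs ^^ t) c) = xs"
proof (induction k arbitrary: c)
  case 0
  show ?case
    by (rule exI[of _ "Suc (Suc 0)"])
      (use 0 in \<open>simp add: funpow_Suc_apply step_def copy_prog_def halted_def\<close>)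
next
  case (Suc k)
  let ?c = "(step copy_prog A xs ^^ Suc (Suc (Suc (Suc (Suc (Suc 0)))))) c"
  have shift: "length xs - k = Suc (length xs - Suc k)"
    using Suc.prems by arith
  have "pc ?c = 1 \<and> reg ?c 0 = 0 \<and> reg ?c 1 = length xs \<and> reg ?c 2 = length xs - k
      \<and> outp ?c = take (length xs - k) xs"
    using Suc.prems
    by (simp add: funpow_Suc_apply step_def copy_prog_def shift take_Suc_conv_app_nth)
  then have "\<exists>t. halted copy_prog ((step copy_prog A xs ^^ t) ?c)
      \<and> outp ((step copy_prog A xs ^^ t) ?c) = xs"
    using Suc.IH[of ?c] Suc_leD[OF Suc.prems(5)] by blast
  then show ?case
    using ex_funpow_shift[of "\<lambda>c. halted copy_prog c \<and> outp c = xs"] by blast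
qed

lemma copy_prog_outlist: "defined copy_prog A xs \<and> outlist copy_prog A xs = xs"
proof -
  have "pc (run copy_prog A xs 1) = 1 \<and> reg (run copy_prog A xs 1) 0 = 0
    \<and> reg (run copy_prog A xs 1) 1 = length xs
    \<and> reg (run copy_prog A xs 1) 2 = length xs - length xs
    \<and> outp (run copy_prog A xs 1) = take (length xs - length xs) xs"
    by (simp add: run_def step_def copy_prog_def init_cfg_def)
  then obtain t where "halted copy_prog (run copy_prog A xs (t + 1))"
      "outp (run copy_prog A xs (t + 1)) = xs"
    using copy_prog_loop[of "run copy_prog A xs 1" xs "length xs"] unfolding run_add by auto
  then show ?thesis
    using final_if_halted[of copy_prog A xs "t + 1"] by (simp add: outlist_def)
qed

lemma teacher_copy_prog: "teacher copy_prog"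
  unfolding teacher_def using copy_prog_outlist by auto

text \<open>A teacher with access to oracle answers is obtained from a plain teacher by running it on
  the part \<open>\<sigma>\<close> of \<open>enc \<sigma> h\<close>: registers are shifted up by four, registers 1 and 2 hold
  \<open>length \<sigma>\<close> and the offset 1 of \<open>\<sigma>\<close> inside \<open>enc \<sigma> h\<close>, register 3 is scratch, and every
  instruction becomes a block of six (padded with jumps to the next block).\<close>

definition enc_block :: "nat \<Rightarrow> instr \<Rightarrow> instr list" where
  "enc_block i ins = (let b = 6 * i + 2; J = Jz 0 (b + 6) in case ins of
      Inc r \<Rightarrow> [Inc (r + 4), J, J, J, J, J]
    | Dec r \<Rightarrow> [Dec (r + 4), J, J, J, J, J]
    | Add r s t \<Rightarrow> [Add (r + 4) (s + 4) (t + 4), J, J, J, J, J]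
    | Sub r s t \<Rightarrow> [Sub (r + 4) (s + 4) (t + 4), J, J, J, J, J]
    | Jz r l \<Rightarrow> [Jz (r + 4) (6 * l + 2), J, J, J, J, J]
    | Len r \<Rightarrow> [Rd (r + 4) 0, J, J, J, J, J]
    | Rd r s \<Rightarrow> [Sub 3 1 (s + 4), Jz 3 (b + 5), Add 3 (s + 4) 2, Rd (r + 4) 3, J,
                  Sub (r + 4) (r + 4) (r + 4)]
    | Out r \<Rightarrow> [Out (r + 4), J, J, J, J, J]
    | Qry r s \<Rightarrow> [Qry (r + 4) (s + 4), J, J, J, J, J])"

definition on_enc :: "prog \<Rightarrow> prog" where
  "on_enc T = [Rd 1 0, Inc 2] @ concat (map (\<lambda>i. enc_block i (T ! i)) [0..<length T])"

definition enc_sim :: "nat list \<Rightarrow> cfg \<Rightarrow> cfg \<Rightarrow> bool" where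
  "enc_sim \<sigma> c c' \<longleftrightarrow> pc c' = 6 * pc c + 2 \<and> reg c' 0 = 0 \<and> reg c' 1 = length \<sigma>
     \<and> reg c' 2 = 1 \<and> (\<forall>r. reg c' (r + 4) = reg c r) \<and> outp c' = outp c"

lemma length_enc_block: "length (enc_block i ins) = 6"
  by (cases ins) (simp_all add: enc_block_def Let_def)

lemma length_concat_blocks: "(\<And>i. length (f i) = k) \<Longrightarrow> length (concat (map f [0..<n])) = k * n"
  by (induction n) auto

lemma nth_concat_blocks:
  assumes "\<And>i. length (f i) = k" "i < n" "d < k"
  shows "concat (map f [0..<n]) ! (k * i + d) = f i ! d"
  using assms(2)
proof (induction n)
  case (Suc n)
  have "k * i + d < k * n" if "i < n"
  proof -
    have "k * i + d < k * Suc i"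
      using assms(3) by simp
    also have "\<dots> \<le> k * n"
      using that by (simp only: mult_le_mono2 Suc_leI)
    finally show ?thesis .
  qed
  moreover have "length (concat (map f [0..<n])) = k * n"
    using assms(1) by (rule length_concat_blocks)
  ultimately show ?case
    using Suc by (cases "i < n") (simp_all add: nth_append less_Suc_eq)
qed simp

lemma length_on_enc: "length (on_enc T) = 6 * length T + 2"
  by (simp add: on_enc_def length_concat_blocks[where k = 6] length_enc_block)

lemma nth_on_enc:
  "i < length T \<Longrightarrow> d < 6 \<Longrightarrow> on_enc T ! (Suc (Suc (6 * i)) + d) = enc_block i (T ! i) ! d"
  using nth_concat_blocks[of "\<lambda>i. enc_block i (T ! i)" 6 i "length T" d]
  by (simp add: on_enc_def length_enc_block nth_append length_concat_blocks[where k = 6])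

lemma nth_enc: "s < length \<sigma> \<Longrightarrow> enc \<sigma> h ! Suc s = \<sigma> ! s"
  by (simp add: enc_def nth_append)

lemma length_enc: "length \<sigma> < length (enc \<sigma> h)"
  by (simp add: enc_def)

lemma hd_enc: "enc \<sigma> h ! 0 = length \<sigma>"
  by (simp add: enc_def)

lemma numeral_plus_eq_Suc:
  "(5::nat) + n = Suc (Suc (Suc (Suc (Suc n))))"
  "(6::nat) + n = Suc (Suc (Suc (Suc (Suc (Suc n)))))"
  "(7::nat) + n = Suc (Suc (Suc (Suc (Suc (Suc (Suc n))))))"
  "(8::nat) + n = Suc (Suc (Suc (Suc (Suc (Suc (Suc (Suc n)))))))"
  by simp_all

lemma on_enc_step:
  assumes sim: "enc_sim \<sigma> c c'" and running: "pc c < length T"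
  shows "\<exists>k. enc_sim \<sigma> (step T A \<sigma> c) ((step (on_enc T) A (enc \<sigma> h) ^^ k) c')"
proof -
  let ?i = "pc c"
  note blk = nth_on_enc[OF running]
  note facts = sim running blk[of 0, simplified] blk[of "Suc 0"] length_on_enc
    hd_enc[of \<sigma> h] length_enc[of \<sigma> h]
  note defs = enc_sim_def step_def enc_block_def funpow_Suc_apply Let_def numeral_plus_eq_Suc
  show ?thesis
  proof (cases "T ! ?i")
    case (Jz r l)
    show ?thesis
    proof (cases "reg c r = 0")
      case True
      show ?thesis
        by (rule exI[of _ "Suc 0"]) (use facts Jz True in \<open>auto simp: defs\<close>)
    next
      case False
      show ?thesis
        by (rule exI[of _ "Suc (Suc 0)"]) (use facts Jz False in \<open>auto simp: defs\<close>)
    qed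
  next
    case (Rd r s)
    show ?thesis
    proof (cases "reg c s < length \<sigma>")
      case True
      show ?thesis
        by (rule exI[of _ "Suc (Suc (Suc (Suc (Suc 0))))"])
          (use facts blk[of "Suc (Suc 0)"] blk[of "Suc (Suc (Suc 0))"]
            blk[of "Suc (Suc (Suc (Suc 0)))"] Rd True nth_enc[OF True, of h]
            in \<open>auto simp: defs\<close>)
    next
      case False
      show ?thesis
        by (rule exI[of _ "Suc (Suc (Suc 0))"])
          (use facts blk[of "Suc (Suc (Suc (Suc (Suc 0))))"] Rd False in \<open>auto simp: defs\<close>)
    qed
  qed (rule exI[of _ "Suc (Suc 0)"], use facts in \<open>auto simp: defs\<close>)+
qed

lemma on_enc_run:
  "\<exists>k. enc_sim \<sigma> (run T A \<sigma> t) (run (on_enc T) A (enc \<sigma> h) (k + 2))"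
proof (induction t)
  case 0
  have "enc_sim \<sigma> init_cfg (run (on_enc T) A (enc \<sigma> h) (0 + 2))"
    using hd_enc[of \<sigma> h] length_enc[of \<sigma> h]
    by (auto simp: enc_sim_def numeral_2_eq_2 run_Suc step_def on_enc_def init_cfg_def)
  then show ?case
    by auto
next
  case (Suc t)
  then obtain k where k: "enc_sim \<sigma> (run T A \<sigma> t) (run (on_enc T) A (enc \<sigma> h) (k + 2))"
    by blast
  show ?case
  proof (cases "pc (run T A \<sigma> t) < length T")
    case True
    then obtain k' where "enc_sim \<sigma> (run T A \<sigma> (Suc t)) (run (on_enc T) A (enc \<sigma> h) (k' + (k + 2)))"
      using on_enc_step[OF k True, of A h] unfolding run_add run_Suc by blast
    then show ?thesis
      by (metis add.assoc)
  next
    case False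
    then have "run T A \<sigma> (Suc t) = run T A \<sigma> t"
      by (simp add: run_Suc step_halted halted_def)
    then show ?thesis
      using k by metis
  qed
qed

lemma on_enc_outlist:
  assumes "defined T A \<sigma>"
  shows "defined (on_enc T) A (enc \<sigma> h) \<and> outlist (on_enc T) A (enc \<sigma> h) = outlist T A \<sigma>"
proof -
  obtain t where halt: "halted T (run T A \<sigma> t)"
    using assms defined_def by blast
  obtain k where k: "enc_sim \<sigma> (run T A \<sigma> t) (run (on_enc T) A (enc \<sigma> h) (k + 2))"
    using on_enc_run by blast
  then have "halted (on_enc T) (run (on_enc T) A (enc \<sigma> h) (k + 2))"
    using halt by (simp add: enc_sim_def halted_def length_on_enc)
  note halt' = final_if_halted[OF this]
  show ?thesis
    using halt' k final_if_halted(1)[OF halt] by (simp add: outlist_def enc_sim_def)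
qed

lemma teacher_TO_on_enc: "teacher T \<Longrightarrow> teacher_TO (on_enc T)"
  unfolding teacher_def teacher_TO_def using on_enc_outlist by auto

lemma tinput_on_enc:
  "teacher T \<Longrightarrow> tinput M (on_enc T) A f = (\<lambda>j. outlist T no_oracle (restr f j))"
  unfolding tinput_def teacher_def using on_enc_outlist by (auto simp: fun_eq_iff)

lemma PRT_subset_PRT_O: "PRT \<subseteq> PRT_O"
proof
  fix F assume "F \<in> PRT"
  then obtain M p where "indexed_family F" and
    "\<forall>n f. range f = F n \<longrightarrow> conv_within F M no_oracle (restr f) (F n) (poly p (mi F (F n)))"
    unfolding PRT_def by blast
  then have "\<forall>n f. range f = F n \<longrightarrow>
      conv_within F (mute_queries M) (\<lambda>x. x \<in> F n) (restr f) (F n) (poly p (mi F (F n)))"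
    using conv_within_mute_queries by blast
  then show "F \<in> PRT_O"
    unfolding PRT_O_def using \<open>indexed_family F\<close> by blast
qed

lemma PRT_subset_PRT_T: "PRT \<subseteq> PRT_T"
proof
  fix F assume "F \<in> PRT"
  then obtain M p where "indexed_family F" and
    "\<forall>n f. range f = F n \<longrightarrow> conv_within F M no_oracle (restr f) (F n) (poly p (mi F (F n)))"
    unfolding PRT_def by blast
  moreover have "(\<lambda>j. outlist copy_prog no_oracle (restr f j)) = restr f" for f
    using copy_prog_outlist by auto
  ultimately have "indexed_family F \<and> teacher copy_prog \<and> (\<forall>n f. range f = F n \<longrightarrow>
      conv_within F M no_oracle (\<lambda>j. outlist copy_prog no_oracle (restr f j)) (F n)
        (poly p (mi F (F n))))"
    using teacher_copy_prog by simp
  then show "F \<in> PRT_T"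
    unfolding PRT_T_def by blast
qed

lemma PRT_O_subset_PRT_TO: "PRT_O \<subseteq> PRT_TO"
proof
  fix F assume "F \<in> PRT_O"
  then obtain M p where "indexed_family F" and
    "\<forall>n f. range f = F n \<longrightarrow>
       conv_within F M (\<lambda>x. x \<in> F n) (restr f) (F n) (poly p (mi F (F n)))"
    unfolding PRT_O_def by blast
  moreover have "tinput M (on_enc copy_prog) A f = restr f" for A f
    using tinput_on_enc[OF teacher_copy_prog] copy_prog_outlist by auto
  ultimately have "indexed_family F \<and> teacher_TO (on_enc copy_prog) \<and> (\<forall>n f. range f = F n \<longrightarrow>
      conv_within F M (\<lambda>x. x \<in> F n) (tinput M (on_enc copy_prog) (\<lambda>x. x \<in> F n) f) (F n)
        (poly p (mi F (F n))))"
    using teacher_TO_on_enc[OF teacher_copy_prog] by simp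
  then show "F \<in> PRT_TO"
    unfolding PRT_TO_def by blast
qed

lemma PRT_T_subset_PRT_TO: "PRT_T \<subseteq> PRT_TO"
proof
  fix F assume "F \<in> PRT_T"
  then obtain M T p where "indexed_family F" "teacher T" and
    "\<forall>n f. range f = F n \<longrightarrow> conv_within F M no_oracle (\<lambda>j. outlist T no_oracle (restr f j))
       (F n) (poly p (mi F (F n)))"
    unfolding PRT_T_def by blast
  then have "\<forall>n f. range f = F n \<longrightarrow> conv_within F (mute_queries M) (\<lambda>x. x \<in> F n)
      (tinput (mute_queries M) (on_enc T) (\<lambda>x. x \<in> F n) f) (F n) (poly p (mi F (F n)))"
    unfolding tinput_on_enc[OF \<open>teacher T\<close>] using conv_within_mute_queries by blast
  then show "F \<in> PRT_TO"
    unfolding PRT_TO_def using \<open>indexed_family F\<close> teacher_TO_on_enc[OF \<open>teacher T\<close>] by blast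
qed


section \<open>The co-singletons: learnable with an oracle, not with a teacher\<close>

text \<open>\<open>cosingletons 0 = UNIV\<close> and \<open>cosingletons (Suc k) = UNIV - {k}\<close>.\<close>

definition cosingletons :: "nat \<Rightarrow> nat set" where
  "cosingletons n = {x. x + 1 \<noteq> n}"

lemma inj_cosingletons: "inj cosingletons"
proof (rule injI, rule ccontr)
  fix a b assume "cosingletons a = cosingletons b" and "a \<noteq> b"
  then have "a - 1 \<in> cosingletons a \<longleftrightarrow> a - 1 \<in> cosingletons b"
    and "b - 1 \<in> cosingletons a \<longleftrightarrow> b - 1 \<in> cosingletons b"
    by simp_all
  with \<open>a \<noteq> b\<close> show False
    by (cases "a = 0") (auto simp: cosingletons_def)
qed

lemma mi_inj: "inj F \<Longrightarrow> mi F (F n) = n"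
  unfolding mi_def by (rule Least_equality) (auto dest: injD)

text \<open>Semi-decides \<open>x \<in> cosingletons n\<close> on input \<open>[n, x]\<close>: it computes \<open>|n - (x + 1)|\<close> and
  loops at instruction 7 if this is zero.\<close>

definition cosingletons_semidecider :: prog where
  "cosingletons_semidecider =
     [Rd 1 0, Inc 2, Rd 3 2, Inc 3, Sub 4 1 3, Sub 5 3 1, Add 4 4 5, Jz 4 7]"

lemma indexed_family_cosingletons: "indexed_family cosingletons"
proof -
  let ?P = cosingletons_semidecider
  have "defined ?P no_oracle [n, x]" if "n \<noteq> x + 1" for n x
  proof -
    have "halted ?P (run ?P no_oracle [n, x] 8)"
      using that by (simp add: numeral_eq_Suc run_Suc step_def cosingletons_semidecider_def
        halted_def init_cfg_def)
    then show ?thesis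
      by (rule final_if_halted)
  qed
  moreover have "\<not> defined ?P no_oracle [x + 1, x]" for x
    by (rule not_defined_if_stuck[of _ _ _ 7, OF refl])
      (simp_all add: numeral_eq_Suc run_Suc step_def cosingletons_semidecider_def halted_def
        init_cfg_def)
  ultimately show ?thesis
    unfolding indexed_family_def cosingletons_def by (metis mem_Collect_eq)
qed

text \<open>Queries \<open>0, 1, \<dots>\<close> up to the input length and outputs \<open>i + 1\<close> for the first \<open>i\<close> outside the
  target, or 0 if there is none.\<close>

definition cosingletons_learner :: prog where
  "cosingletons_learner =
     [Len 1, Sub 3 1 2, Jz 3 9, Qry 4 2, Jz 4 7, Inc 2, Jz 0 1, Inc 2, Add 0 2 5]"

lemma cosingletons_learner_loop:
  "pc c = 1 \<Longrightarrow> reg c 0 = 0 \<Longrightarrow> reg c 1 = length xs \<Longrightarrow> reg c 5 = 0 \<Longrightarrow>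
     reg c 2 + k = length xs \<Longrightarrow> n = 0 \<or> reg c 2 < n \<Longrightarrow>
   \<exists>t \<le> 6 * k + 6. halted cosingletons_learner
       ((step cosingletons_learner (\<lambda>x. x \<in> cosingletons n) xs ^^ t) c)
     \<and> reg ((step cosingletons_learner (\<lambda>x. x \<in> cosingletons n) xs ^^ t) c) 0
       = (if 0 < n \<and> n \<le> length xs then n else 0)"
proof (induction k arbitrary: c)
  case 0
  show ?case
    by (rule exI[of _ "Suc (Suc 0)"])
      (use 0 in \<open>auto simp: funpow_Suc_apply step_def cosingletons_learner_def halted_def\<close>)
next
  case (Suc k)
  let ?s = "step cosingletons_learner (\<lambda>x. x \<in> cosingletons n) xs"
  let ?c = "(?s ^^ Suc (Suc (Suc (Suc (Suc (Suc 0)))))) c"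
  have running: "reg c 2 < length xs"
    using Suc.prems by linarith
  show ?case
  proof (cases "reg c 2 + 1 = n")
    case True
    then have "halted cosingletons_learner ?c \<and> reg ?c 0 = n" "n \<le> length xs"
      using Suc.prems running
      by (auto simp: funpow_Suc_apply step_def cosingletons_learner_def cosingletons_def halted_def)
    then show ?thesis
      using True by (intro exI[of _ "Suc (Suc (Suc (Suc (Suc (Suc 0)))))"]) auto
  next
    case False
    then have "pc ?c = 1 \<and> reg ?c 0 = 0 \<and> reg ?c 1 = length xs \<and> reg ?c 5 = 0
        \<and> reg ?c 2 + k = length xs \<and> (n = 0 \<or> reg ?c 2 < n)"
      using Suc.prems running
      by (auto simp: funpow_Suc_apply step_def cosingletons_learner_def cosingletons_def)
    then obtain t where t: "t \<le> 6 * k + 6" "halted cosingletons_learner ((?s ^^ t) ?c)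
        \<and> reg ((?s ^^ t) ?c) 0 = (if 0 < n \<and> n \<le> length xs then n else 0)"
      using Suc.IH by blast
    have "(?s ^^ (t + Suc (Suc (Suc (Suc (Suc (Suc 0))))))) c = (?s ^^ t) ?c"
      by (simp only: funpow_add o_apply)
    then show ?thesis
      using t by (intro exI[of _ "t + Suc (Suc (Suc (Suc (Suc (Suc 0)))))"])
        (simp del: funpow.simps)
  qed
qed

lemma cosingletons_learner_run:
  fixes n :: nat
  defines "A \<equiv> \<lambda>x. x \<in> cosingletons n"
  shows "defined cosingletons_learner A xs \<and> steps cosingletons_learner A xs \<le> 6 * length xs + 7
    \<and> result cosingletons_learner A xs = (if 0 < n \<and> n \<le> length xs then n else 0)"
proof -
  let ?L = cosingletons_learner
  have "pc (run ?L A xs 1) = 1 \<and> reg (run ?L A xs 1) 0 = 0 \<and> reg (run ?L A xs 1) 1 = length xs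
    \<and> reg (run ?L A xs 1) 5 = 0 \<and> reg (run ?L A xs 1) 2 + length xs = length xs"
    by (simp add: run_def step_def cosingletons_learner_def init_cfg_def)
  then obtain t where "t \<le> 6 * length xs + 6" "halted ?L (run ?L A xs (t + 1))"
      "reg (run ?L A xs (t + 1)) 0 = (if 0 < n \<and> n \<le> length xs then n else 0)"
    using cosingletons_learner_loop[of "run ?L A xs 1" xs "length xs" n]
    unfolding A_def run_add by auto
  then show ?thesis
    using final_if_halted[of ?L A xs "t + 1"] by (simp add: result_def)
qed

lemma cosingletons_PRT_O: "cosingletons \<in> PRT_O"
proof -
  let ?L = cosingletons_learner and ?p = "[:8, 13, 6:] :: nat poly"
  have "conv_within cosingletons ?L (\<lambda>x. x \<in> cosingletons n) (restr f) (cosingletons n)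
      (poly ?p (mi cosingletons (cosingletons n)))" for n f
  proof -
    let ?A = "\<lambda>x. x \<in> cosingletons n"
    have "(\<Sum>j\<le>n. length (queries ?L ?A (restr f j))) \<le> (\<Sum>j\<le>n. steps ?L ?A (restr f j))"
      by (rule sum_mono) (rule length_queries_le_steps)
    moreover have "(\<Sum>j\<le>n. steps ?L ?A (restr f j)) \<le> (\<Sum>j\<le>n. 6 * n + 7)"
    proof (rule sum_mono)
      fix j assume "j \<in> {..n}"
      then show "steps ?L ?A (restr f j) \<le> 6 * n + 7"
        using cosingletons_learner_run[of n "restr f j"] by (simp add: restr_def)
    qed
    moreover have "(\<Sum>j\<le>n. 6 * n + 7) < poly ?p n"
      by (simp add: algebra_simps)
    ultimately show ?thesis
      unfolding conv_within_def mi_inj[OF inj_cosingletons]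
      using cosingletons_learner_run by (intro exI[of _ n]) (auto simp: restr_def)
  qed
  then show ?thesis
    unfolding PRT_O_def using indexed_family_cosingletons by blast
qed

text \<open>Identification in the limit from text by a function \<open>h\<close> that need not be computable.\<close>

definition identifies_cosingletons :: "(nat list \<Rightarrow> nat) \<Rightarrow> bool" where
  "identifies_cosingletons h \<longleftrightarrow> (\<forall>n f. range f = cosingletons n \<longrightarrow>
      (\<exists>i. (\<forall>j\<ge>i. h (restr f j) = h (restr f i)) \<and> cosingletons (h (restr f i)) = cosingletons n))"

lemma length_restr [simp]: "length (restr f n) = n"
  by (simp add: restr_def)

lemma set_restr: "set (restr f n) = f ` {..<n}"
  by (auto simp: restr_def)

lemma restr_eq_append:
  assumes "length \<sigma> \<le> j" and "\<And>x. x < length \<sigma> \<Longrightarrow> f x = \<sigma> ! x"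
  shows "restr f j = \<sigma> @ drop (length \<sigma>) (restr f j)"
proof -
  have "take (length \<sigma>) (restr f j) = \<sigma>"
    using assms by (auto simp: restr_def intro!: nth_equalityI)
  then show ?thesis
    by (metis append_take_drop_id)
qed

lemma range_skip: "range (\<lambda>y. if y < k then y else Suc y) = UNIV - {k}"
proof (intro equalityI subsetI)
  fix y assume "y \<in> UNIV - {k}"
  show "y \<in> range (\<lambda>y. if y < k then y else Suc y)"
  proof (cases "y < k")
    case True
    then show ?thesis
      by (intro image_eqI[where x = y]) simp_all
  next
    case False
    with \<open>y \<in> UNIV - {k}\<close> show ?thesis
      by (intro image_eqI[where x = "y - 1"]) auto
  qed
qed auto

lemma range_prepend:
  "range (\<lambda>x. if x < length \<sigma> then \<sigma> ! x else f (x - length \<sigma>)) = set \<sigma> \<union> range f"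
proof (intro equalityI subsetI)
  fix y assume "y \<in> set \<sigma> \<union> range f"
  then show "y \<in> range (\<lambda>x. if x < length \<sigma> then \<sigma> ! x else f (x - length \<sigma>))"
  proof
    assume "y \<in> set \<sigma>"
    then obtain i where "i < length \<sigma>" "y = \<sigma> ! i"
      by (auto simp: in_set_conv_nth)
    then show ?thesis
      by (intro image_eqI[where x = i]) simp_all
  next
    assume "y \<in> range f"
    then obtain z where "y = f z"
      by auto
    then show ?thesis
      by (intro image_eqI[where x = "z + length \<sigma>"]) simp_all
  qed
qed auto

text \<open>A locking sequence \<open>\<sigma>\<close> for \<open>UNIV\<close>, continued by an enumeration of \<open>UNIV - {k}\<close> for some
  \<open>k \<notin> set \<sigma>\<close>, is a text for \<open>cosingletons (Suc k)\<close> on which \<open>h\<close> converges to an index of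
  \<open>UNIV\<close>.\<close>

lemma locking_sequence_not_identifies:
  assumes lock: "\<forall>\<tau>. h (\<sigma> @ \<tau>) = 0"
  shows "\<not> identifies_cosingletons h"
proof
  assume "identifies_cosingletons h"
  obtain k where "k \<notin> set \<sigma>"
    using ex_new_if_finite[OF infinite_UNIV_nat, of "set \<sigma>"] by auto
  let ?skip = "\<lambda>y. if y < k then y else Suc y"
  define g where "g x = (if x < length \<sigma> then \<sigma> ! x else ?skip (x - length \<sigma>))" for x
  have "range g = cosingletons (Suc k)"
    unfolding g_def range_prepend[of \<sigma> ?skip] range_skip using \<open>k \<notin> set \<sigma>\<close>
    by (auto simp: cosingletons_def)
  with \<open>identifies_cosingletons h\<close> obtain i where conv: "\<forall>j\<ge>i. h (restr g j) = h (restr g i)"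
    and correct: "cosingletons (h (restr g i)) = cosingletons (Suc k)"
    unfolding identifies_cosingletons_def by blast
  let ?j = "max i (length \<sigma>)"
  have "restr g ?j = \<sigma> @ drop (length \<sigma>) (restr g ?j)"
    by (rule restr_eq_append) (auto simp: g_def)
  then have "h (restr g ?j) = 0"
    using lock by metis
  moreover have "h (restr g ?j) = h (restr g i)"
    using conv by (meson max.cobounded1)
  ultimately have "cosingletons 0 = cosingletons (Suc k)"
    using correct by simp
  then show False
    using inj_cosingletons by (simp add: inj_eq)
qed

lemma restr_prefix_chain_limit:
  assumes chain: "\<And>m m'. m \<le> m' \<Longrightarrow> prefix (s m) (s m')" and long: "\<And>m. m \<le> length (s m)"
  shows "restr (\<lambda>x. s (Suc x) ! x) (length (s m)) = s m"
proof (rule nth_equalityI)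
  fix x assume "x < length (restr (\<lambda>x. s (Suc x) ! x) (length (s m)))"
  then have "x < length (s m)" "x < length (s (Suc x))"
    using long[of "Suc x"] by simp_all
  moreover have "prefix (s m) (s (Suc x)) \<or> prefix (s (Suc x)) (s m)"
    using chain nat_le_linear by blast
  ultimately show "restr (\<lambda>x. s (Suc x) ! x) (length (s m)) ! x = s m ! x"
    by (auto simp: restr_def prefix_def nth_append)
qed simp

fun mind_change_text :: "(nat list \<Rightarrow> nat list) \<Rightarrow> nat \<Rightarrow> nat list" where
  "mind_change_text ext 0 = []"
| "mind_change_text ext (Suc m) =
     (mind_change_text ext m @ [m]) @ ext (mind_change_text ext m @ [m])"

lemma prefix_mind_change_text:
  "m \<le> m' \<Longrightarrow> prefix (mind_change_text ext m) (mind_change_text ext m')"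
proof (induction m')
  case (Suc m')
  show ?case
  proof (cases "m = Suc m'")
    case False
    then have "prefix (mind_change_text ext m) (mind_change_text ext m')"
      using Suc by simp
    then show ?thesis
      by (simp add: prefix_def) (metis append.assoc)
  qed simp
qed simp

lemma length_mind_change_text: "m \<le> length (mind_change_text ext m)"
  by (induction m) auto

text \<open>Without a locking sequence for \<open>UNIV\<close>, alternately appending the next number and an
  extension on which \<open>h\<close> moves away from 0 yields a text for \<open>UNIV\<close> on which \<open>h\<close> keeps
  leaving 0.\<close>

lemma no_locking_sequence_not_identifies:
  assumes unlocked: "\<forall>\<sigma>. \<exists>\<tau>. h (\<sigma> @ \<tau>) \<noteq> 0"
  shows "\<not> identifies_cosingletons h"
proof
  assume "identifies_cosingletons h"
  define ext where "ext \<sigma> = (SOME \<tau>. h (\<sigma> @ \<tau>) \<noteq> 0)" for \<sigma>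
  have ext: "h (\<sigma> @ ext \<sigma>) \<noteq> 0" for \<sigma>
  proof -
    have "\<exists>\<tau>. h (\<sigma> @ \<tau>) \<noteq> 0"
      using unlocked by blast
    then show ?thesis
      unfolding ext_def by (rule someI_ex)
  qed
  let ?s = "mind_change_text ext"
  define f where "f x = ?s (Suc x) ! x" for x
  have restr_f: "restr f (length (?s m)) = ?s m" for m
    unfolding f_def
    by (rule restr_prefix_chain_limit)
      (simp_all add: prefix_mind_change_text length_mind_change_text)
  have "m \<in> set (restr f (length (?s (Suc m))))" for m
    unfolding restr_f by simp
  then have "range f = cosingletons 0"
    by (auto simp: cosingletons_def set_restr)
  with \<open>identifies_cosingletons h\<close> obtain i where conv: "\<forall>j\<ge>i. h (restr f j) = h (restr f i)"
    and correct: "cosingletons (h (restr f i)) = cosingletons 0"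
    unfolding identifies_cosingletons_def by blast
  have "h (restr f i) = 0"
    using correct injD[OF inj_cosingletons] by blast
  moreover have "h (restr f (length (?s (Suc i)))) \<noteq> 0"
    unfolding restr_f using ext[of "?s i @ [i]"] by simp
  moreover have "i \<le> length (?s (Suc i))"
    using length_mind_change_text[of "Suc i" ext] by simp
  ultimately show False
    using conv by metis
qed

lemma not_identifies_cosingletons: "\<not> identifies_cosingletons h"
  using locking_sequence_not_identifies no_locking_sequence_not_identifies by blast

lemma cosingletons_not_PRT_T: "cosingletons \<notin> PRT_T"
proof
  assume "cosingletons \<in> PRT_T"
  then obtain M T p where "\<forall>n f. range f = cosingletons n \<longrightarrow>
      conv_within cosingletons M no_oracle (\<lambda>j. outlist T no_oracle (restr f j)) (cosingletons n)
        (poly p (mi cosingletons (cosingletons n)))"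
    unfolding PRT_T_def by blast
  then have "identifies_cosingletons (\<lambda>\<sigma>. result M no_oracle (outlist T no_oracle \<sigma>))"
    unfolding identifies_cosingletons_def conv_within_def by blast
  then show False
    using not_identifies_cosingletons by blast
qed


section \<open>The tower singletons: learnable with a teacher, not with an oracle\<close>

definition tower :: "nat \<Rightarrow> nat" where
  "tower n = ((\<lambda>a. 2 ^ a) ^^ n) 1"

lemma tower_0 [simp]: "tower 0 = 1"
  by (simp add: tower_def)

lemma tower_Suc [simp]: "tower (Suc n) = 2 ^ tower n"
  by (simp add: tower_def)

lemma less_tower: "n < tower n"
proof (induction n)
  case (Suc n)
  then have "Suc n \<le> tower n"
    by simp
  then show ?case
    by (simp add: le_less_trans[OF _ less_exp])
qed simp

lemma strict_mono_tower: "strict_mono tower"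
  unfolding strict_mono_Suc_iff by (simp add: less_exp)

lemma inj_tower: "inj tower"
  unfolding inj_def using strict_mono_eq[OF strict_mono_tower] by blast

lemma tower_gap: "1 \<le> N \<Longrightarrow> tower N + 2 \<le> tower (Suc N)"
proof -
  assume "1 \<le> N"
  then have "tower 1 \<le> tower N"
    using strict_mono_tower strict_mono_less_eq by blast
  then obtain k where k: "tower N = Suc k" "1 \<le> k"
    by (cases "tower N") auto
  have "Suc k \<le> 2 ^ k"
    by (simp add: Suc_le_eq)
  then show ?thesis
    using k by simp
qed

definition tower_singletons :: "nat \<Rightarrow> nat set" where
  "tower_singletons n = {tower n}"

lemma inj_tower_singletons: "inj tower_singletons"
  unfolding tower_singletons_def using inj_tower by (simp add: inj_def)

text \<open>Instructions \<open>p, \<dots>, p + 3\<close> run \<open>while c \<noteq> 0 do (v := v + v; c := c - 1)\<close>; the register \<open>z\<close>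
  holds 0 and serves for the jump back.\<close>

lemma doubling_loop:
  assumes P: "P ! p = Jz c (Suc (Suc (Suc (Suc p))))" "P ! Suc p = Add v v v"
    "P ! Suc (Suc p) = Dec c" "P ! Suc (Suc (Suc p)) = Jz z p" "Suc (Suc (Suc p)) < length P"
    and regs: "c \<noteq> v" "z \<noteq> c" "z \<noteq> v"
  shows "pc d = p \<Longrightarrow> reg d z = 0 \<Longrightarrow> reg d c = k \<Longrightarrow>
    \<exists>t. pc ((step P A xs ^^ t) d) = Suc (Suc (Suc (Suc p)))
      \<and> reg ((step P A xs ^^ t) d) = (reg d)(c := 0, v := reg d v * 2 ^ k)
      \<and> outp ((step P A xs ^^ t) d) = outp d"
proof (induction k arbitrary: d)
  case 0
  show ?case
    by (rule exI[of _ "Suc 0"]) (use 0 P in \<open>auto simp: funpow_Suc_apply step_def fun_eq_iff\<close>)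
next
  case (Suc k)
  let ?s = "step P A xs"
  let ?d = "(?s ^^ Suc (Suc (Suc (Suc 0)))) d"
  have d: "pc ?d = p \<and> reg ?d z = 0 \<and> reg ?d c = k \<and> reg ?d = (reg d)(c := k, v := reg d v * 2)
      \<and> outp ?d = outp d"
    using Suc.prems P regs by (auto simp: funpow_Suc_apply step_def fun_eq_iff)
  then obtain t where t: "pc ((?s ^^ t) ?d) = Suc (Suc (Suc (Suc p)))"
      "reg ((?s ^^ t) ?d) = (reg ?d)(c := 0, v := reg ?d v * 2 ^ k)" "outp ((?s ^^ t) ?d) = outp ?d"
    using Suc.IH by blast
  have "(?s ^^ (t + Suc (Suc (Suc (Suc 0))))) d = (?s ^^ t) ?d"
    by (simp only: funpow_add o_apply)
  moreover have "(reg ?d)(c := 0, v := reg ?d v * 2 ^ k)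
      = (reg d)(c := 0, v := reg d v * 2 ^ Suc k)"
    using d regs by (simp add: fun_eq_iff)
  ultimately show ?case
    using t d by (intro exI[of _ "t + Suc (Suc (Suc (Suc 0)))"])
      (simp add: fun_eq_iff del: funpow.simps)
qed

text \<open>On input \<open>[n, x]\<close> this computes \<open>tower n\<close> by \<open>n\<close> rounds of the doubling loop and halts
  iff the result is \<open>x\<close>; otherwise it loops at instruction 19.\<close>

definition tower_semidecider :: prog where
  "tower_semidecider =
     [Rd 1 0, Inc 2, Rd 3 2, Inc 4, Jz 1 15, Add 5 4 0, Sub 6 6 6, Inc 6, Jz 5 12, Add 6 6 6,
      Dec 5, Jz 0 8, Add 4 6 0, Dec 1, Jz 0 4, Sub 7 4 3, Sub 8 3 4, Add 7 7 8, Jz 7 20, Jz 0 19]"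

lemma tower_semidecider_loop:
  "pc d = 4 \<Longrightarrow> reg d 0 = 0 \<Longrightarrow> reg d 1 = k \<Longrightarrow>
   \<exists>t. pc ((step tower_semidecider A xs ^^ t) d) = 15
     \<and> reg ((step tower_semidecider A xs ^^ t) d) 4 = ((\<lambda>a. 2 ^ a) ^^ k) (reg d 4)
     \<and> reg ((step tower_semidecider A xs ^^ t) d) 3 = reg d 3
     \<and> reg ((step tower_semidecider A xs ^^ t) d) 0 = 0"
proof (induction k arbitrary: d)
  case 0
  show ?case
    by (rule exI[of _ "Suc 0"])
      (use 0 in \<open>simp add: funpow_Suc_apply step_def tower_semidecider_def\<close>)
next
  case (Suc k)
  let ?s = "step tower_semidecider A xs"
  let ?d1 = "(?s ^^ 4) d"
  have d1: "pc ?d1 = 8 \<and> reg ?d1 0 = 0 \<and> reg ?d1 5 = reg d 4 \<and> reg ?d1 6 = 1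
      \<and> reg ?d1 1 = Suc k \<and> reg ?d1 3 = reg d 3"
    using Suc.prems by (simp add: numeral_eq_Suc funpow_Suc_apply step_def tower_semidecider_def)
  obtain t1 where t1: "pc ((?s ^^ t1) ?d1) = 12"
      "reg ((?s ^^ t1) ?d1) = (reg ?d1)(5 := 0, 6 := reg ?d1 6 * 2 ^ reg d 4)"
    using doubling_loop[where P = tower_semidecider and p = 8 and c = 5 and v = 6 and z = 0
        and A = A and xs = xs and k = "reg d 4" and d = ?d1] d1
    by (auto simp: tower_semidecider_def)
  let ?d2 = "(?s ^^ 3) ((?s ^^ t1) ?d1)"
  have "pc ?d2 = 4 \<and> reg ?d2 0 = 0 \<and> reg ?d2 1 = k \<and> reg ?d2 4 = 2 ^ reg d 4
      \<and> reg ?d2 3 = reg d 3"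
    using t1 d1 by (simp add: numeral_3_eq_3 funpow_Suc_apply step_def tower_semidecider_def)
  then obtain t2 where t2: "pc ((?s ^^ t2) ?d2) = 15"
      "reg ((?s ^^ t2) ?d2) 4 = ((\<lambda>a. 2 ^ a) ^^ k) (2 ^ reg d 4)"
      "reg ((?s ^^ t2) ?d2) 3 = reg d 3" "reg ((?s ^^ t2) ?d2) 0 = 0"
    using Suc.IH[of ?d2] by auto
  have "(?s ^^ (t2 + 3 + t1 + 4)) d = (?s ^^ t2) ?d2"
    by (simp only: funpow_add o_apply)
  then show ?case
    using t2 by (intro exI[of _ "t2 + 3 + t1 + 4"]) (simp add: funpow_Suc_right del: funpow.simps)
qed

lemma defined_tower_semidecider: "defined tower_semidecider A [n, x] \<longleftrightarrow> x = tower n"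
proof -
  let ?s = "step tower_semidecider A [n, x]"
  let ?d0 = "run tower_semidecider A [n, x] 4"
  have "pc ?d0 = 4 \<and> reg ?d0 0 = 0 \<and> reg ?d0 1 = n \<and> reg ?d0 3 = x \<and> reg ?d0 4 = 1"
    by (simp add: numeral_eq_Suc run_Suc step_def tower_semidecider_def init_cfg_def)
  then obtain t where "pc ((?s ^^ t) ?d0) = 15 \<and> reg ((?s ^^ t) ?d0) 4 = tower n
      \<and> reg ((?s ^^ t) ?d0) 3 = x \<and> reg ((?s ^^ t) ?d0) 0 = 0"
    using tower_semidecider_loop[of ?d0 n A "[n, x]"] by (auto simp: tower_def)
  moreover have tail: "pc d = 15 \<Longrightarrow> reg d 4 = tower n \<Longrightarrow> reg d 3 = x \<Longrightarrow> reg d 0 = 0 \<Longrightarrow>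
      (x = tower n \<longrightarrow> halted tower_semidecider ((?s ^^ 4) d))
      \<and> (x \<noteq> tower n \<longrightarrow> pc ((?s ^^ 4) d) = 19 \<and> reg ((?s ^^ 4) d) 0 = 0)" for d
    by (simp add: numeral_eq_Suc funpow_Suc_apply step_def tower_semidecider_def halted_def)
  moreover have "run tower_semidecider A [n, x] (4 + (t + 4)) = (?s ^^ 4) ((?s ^^ t) ?d0)"
    by (simp only: run_add)
  ultimately have final:
    "x = tower n \<Longrightarrow> halted tower_semidecider (run tower_semidecider A [n, x] (4 + (t + 4)))"
    "x \<noteq> tower n \<Longrightarrow> pc (run tower_semidecider A [n, x] (4 + (t + 4))) = 19
      \<and> reg (run tower_semidecider A [n, x] (4 + (t + 4))) 0 = 0"
    by metis+
  show ?thesis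
  proof (cases "x = tower n")
    case True
    then show ?thesis
      using final(1) final_if_halted by blast
  next
    case False
    then have "\<not> defined tower_semidecider A [n, x]"
      using final(2)
      by (intro not_defined_if_stuck[of _ _ _ "4 + (t + 4)", OF refl])
        (simp_all add: step_def tower_semidecider_def halted_def)
    then show ?thesis
      using False by simp
  qed
qed

lemma indexed_family_tower_singletons: "indexed_family tower_singletons"
  unfolding indexed_family_def tower_singletons_def using defined_tower_semidecider by auto

definition tower_level :: "nat \<Rightarrow> nat" where
  "tower_level x = (LEAST k. x \<le> tower k)"

lemma le_tower_level: "x \<le> tower (tower_level x)"
  unfolding tower_level_def by (rule LeastI[of _ x]) (use less_tower in \<open>simp add: less_imp_le\<close>)

lemma tower_level_less: "k < tower_level x \<Longrightarrow> \<not> x \<le> tower k"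
  unfolding tower_level_def by (rule not_less_Least)

lemma tower_level_tower: "tower_level (tower n) = n"
  unfolding tower_level_def
proof (rule Least_equality)
  show "n \<le> k" if "tower n \<le> tower k" for k
    using that strict_mono_tower strict_mono_less_eq by blast
qed simp

text \<open>On a nonempty input \<open>\<sigma>\<close> with \<open>x = hd \<sigma>\<close>, this computes \<open>tower 0, tower 1, \<dots>\<close> (register 3,
  its index in register 4) until \<open>x \<le> tower k\<close>, i.e.\ \<open>k = tower_level x\<close>, and then outputs \<open>x\<close>
  exactly \<open>k + 1\<close> times.\<close>

definition tower_teacher :: prog where
  "tower_teacher =
     [Len 1, Jz 1 21, Rd 2 0, Inc 3, Sub 5 2 3, Jz 5 16, Add 6 3 0, Sub 7 7 7, Inc 7, Jz 6 13,
      Add 7 7 7, Dec 6, Jz 0 9, Add 3 7 0, Inc 4, Jz 0 4, Inc 4, Jz 4 21, Out 2, Dec 4, Jz 0 17]"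

lemma tower_teacher_found:
  "pc d = 4 \<Longrightarrow> reg d 2 \<le> reg d 3 \<Longrightarrow>
   pc ((step tower_teacher A xs ^^ 2) d) = 16
   \<and> reg ((step tower_teacher A xs ^^ 2) d) 0 = reg d 0
   \<and> reg ((step tower_teacher A xs ^^ 2) d) 2 = reg d 2
   \<and> reg ((step tower_teacher A xs ^^ 2) d) 4 = reg d 4
   \<and> outp ((step tower_teacher A xs ^^ 2) d) = outp d"
  by (simp add: eval_nat_numeral funpow_Suc_apply step_def tower_teacher_def)

lemma tower_teacher_climb:
  "pc d = 4 \<Longrightarrow> reg d 0 = 0 \<Longrightarrow> \<not> reg d 2 \<le> reg d 3 \<Longrightarrow>
   pc ((step tower_teacher A xs ^^ 5) d) = 9
   \<and> reg ((step tower_teacher A xs ^^ 5) d) 0 = 0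
   \<and> reg ((step tower_teacher A xs ^^ 5) d) 6 = reg d 3
   \<and> reg ((step tower_teacher A xs ^^ 5) d) 7 = 1
   \<and> reg ((step tower_teacher A xs ^^ 5) d) 2 = reg d 2
   \<and> reg ((step tower_teacher A xs ^^ 5) d) 4 = reg d 4
   \<and> outp ((step tower_teacher A xs ^^ 5) d) = outp d"
  by (simp add: eval_nat_numeral funpow_Suc_apply step_def tower_teacher_def)

lemma tower_teacher_next_level:
  "pc d = 13 \<Longrightarrow> reg d 0 = 0 \<Longrightarrow>
   pc ((step tower_teacher A xs ^^ 3) d) = 4
   \<and> reg ((step tower_teacher A xs ^^ 3) d) 0 = 0
   \<and> reg ((step tower_teacher A xs ^^ 3) d) 3 = reg d 7
   \<and> reg ((step tower_teacher A xs ^^ 3) d) 2 = reg d 2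
   \<and> reg ((step tower_teacher A xs ^^ 3) d) 4 = Suc (reg d 4)
   \<and> outp ((step tower_teacher A xs ^^ 3) d) = outp d"
  by (simp add: eval_nat_numeral funpow_Suc_apply step_def tower_teacher_def)

lemma tower_teacher_level_loop:
  "pc d = 4 \<Longrightarrow> reg d 0 = 0 \<Longrightarrow> reg d 2 = x \<Longrightarrow> reg d 4 = k \<Longrightarrow> reg d 3 = tower k \<Longrightarrow>
   k + e = tower_level x \<Longrightarrow>
   \<exists>t. pc ((step tower_teacher A xs ^^ t) d) = 16 \<and> reg ((step tower_teacher A xs ^^ t) d) 0 = 0
     \<and> reg ((step tower_teacher A xs ^^ t) d) 2 = x
     \<and> reg ((step tower_teacher A xs ^^ t) d) 4 = tower_level x
     \<and> outp ((step tower_teacher A xs ^^ t) d) = outp d"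
proof (induction e arbitrary: d k)
  case 0
  then have "reg d 2 \<le> reg d 3"
    using le_tower_level by simp
  with 0 show ?case
    using tower_teacher_found[of d A xs] by (intro exI[of _ 2]) simp
next
  case (Suc e)
  let ?s = "step tower_teacher A xs"
  let ?d1 = "(?s ^^ 5) d"
  have "\<not> reg d 2 \<le> reg d 3"
    using tower_level_less[of k x] Suc.prems by simp
  then have d1: "pc ?d1 = 9 \<and> reg ?d1 0 = 0 \<and> reg ?d1 6 = tower k \<and> reg ?d1 7 = 1
      \<and> reg ?d1 2 = x \<and> reg ?d1 4 = k \<and> outp ?d1 = outp d"
    using tower_teacher_climb[of d A xs] Suc.prems by simp
  have "\<exists>t. pc ((?s ^^ t) ?d1) = 13
      \<and> reg ((?s ^^ t) ?d1) = (reg ?d1)(6 := 0, 7 := reg ?d1 7 * 2 ^ tower k)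
      \<and> outp ((?s ^^ t) ?d1) = outp ?d1"
    by (rule doubling_loop[where P = tower_teacher and p = 9 and c = 6 and v = 7 and z = 0,
          simplified])
      (use d1 in \<open>simp_all add: tower_teacher_def\<close>)
  then obtain t1 where t1: "pc ((?s ^^ t1) ?d1) = 13"
      "reg ((?s ^^ t1) ?d1) = (reg ?d1)(6 := 0, 7 := reg ?d1 7 * 2 ^ tower k)"
      "outp ((?s ^^ t1) ?d1) = outp ?d1"
    by blast
  let ?d2 = "(?s ^^ 3) ((?s ^^ t1) ?d1)"
  have "pc ?d2 = 4 \<and> reg ?d2 0 = 0 \<and> reg ?d2 2 = x \<and> reg ?d2 4 = Suc k
      \<and> reg ?d2 3 = tower (Suc k) \<and> outp ?d2 = outp d"
    using tower_teacher_next_level[of "(?s ^^ t1) ?d1" A xs] t1 d1 by simp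
  then obtain t2 where t2: "pc ((?s ^^ t2) ?d2) = 16" "reg ((?s ^^ t2) ?d2) 0 = 0"
      "reg ((?s ^^ t2) ?d2) 2 = x" "reg ((?s ^^ t2) ?d2) 4 = tower_level x"
      "outp ((?s ^^ t2) ?d2) = outp d"
    using Suc.IH[of ?d2 "Suc k"] Suc.prems by auto
  have "(?s ^^ (t2 + 3 + t1 + 5)) d = (?s ^^ t2) ?d2"
    by (simp only: funpow_add o_apply)
  then show ?case
    using t2 by (intro exI[of _ "t2 + 3 + t1 + 5"]) (simp del: funpow.simps)
qed

lemma tower_teacher_output_loop:
  "pc d = 17 \<Longrightarrow> reg d 0 = 0 \<Longrightarrow> reg d 4 = m \<Longrightarrow>
   \<exists>t. halted tower_teacher ((step tower_teacher A xs ^^ t) d)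
     \<and> outp ((step tower_teacher A xs ^^ t) d) = outp d @ replicate m (reg d 2)"
proof (induction m arbitrary: d)
  case 0
  show ?case
    by (rule exI[of _ "Suc 0"])
      (use 0 in \<open>simp add: funpow_Suc_apply step_def tower_teacher_def halted_def\<close>)
next
  case (Suc m)
  let ?s = "step tower_teacher A xs"
  let ?d = "(?s ^^ 4) d"
  have "pc ?d = 17 \<and> reg ?d 0 = 0 \<and> reg ?d 4 = m \<and> reg ?d 2 = reg d 2
      \<and> outp ?d = outp d @ [reg d 2]"
    using Suc.prems by (simp add: eval_nat_numeral funpow_Suc_apply step_def tower_teacher_def)
  then obtain t where t: "halted tower_teacher ((?s ^^ t) ?d)"
      "outp ((?s ^^ t) ?d) = outp d @ replicate (Suc m) (reg d 2)"
    using Suc.IH[of ?d] by (auto simp: replicate_append_same)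
  have "(?s ^^ (t + 4)) d = (?s ^^ t) ?d"
    by (simp only: funpow_add o_apply)
  then show ?case
    using t by (intro exI[of _ "t + 4"]) (simp del: funpow.simps)
qed

lemma outlist_tower_teacher:
  "defined tower_teacher A \<sigma>
   \<and> outlist tower_teacher A \<sigma>
     = (if \<sigma> = [] then [] else replicate (Suc (tower_level (hd \<sigma>))) (hd \<sigma>))"
proof (cases "\<sigma> = []")
  case True
  have "halted tower_teacher (run tower_teacher A [] 2) \<and> outp (run tower_teacher A [] 2) = []"
    by (simp add: eval_nat_numeral run_Suc step_def tower_teacher_def halted_def init_cfg_def)
  with True show ?thesis
    using final_if_halted[of tower_teacher A "[]" 2] by (simp add: outlist_def)
next
  case False
  let ?r = "run tower_teacher A \<sigma>" and ?x = "hd \<sigma>"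
  have "pc (?r 4) = 4 \<and> reg (?r 4) 0 = 0 \<and> reg (?r 4) 2 = ?x \<and> reg (?r 4) 4 = 0
    \<and> reg (?r 4) 3 = tower 0 \<and> outp (?r 4) = []"
    using False
    by (cases \<sigma>) (simp_all add: eval_nat_numeral run_Suc step_def tower_teacher_def init_cfg_def)
  then obtain t1 where "pc (?r (t1 + 4)) = 16" "reg (?r (t1 + 4)) 0 = 0" "reg (?r (t1 + 4)) 2 = ?x"
      "reg (?r (t1 + 4)) 4 = tower_level ?x" "outp (?r (t1 + 4)) = []"
    using tower_teacher_level_loop[of "?r 4" ?x 0 "tower_level ?x"] by (auto simp: run_add)
  moreover have "?r (Suc (t1 + 4)) = step tower_teacher A \<sigma> (?r (t1 + 4))"
    by (rule run_Suc)
  ultimately have "pc (?r (Suc (t1 + 4))) = 17 \<and> reg (?r (Suc (t1 + 4))) 0 = 0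
      \<and> reg (?r (Suc (t1 + 4))) 2 = ?x \<and> reg (?r (Suc (t1 + 4))) 4 = Suc (tower_level ?x)
      \<and> outp (?r (Suc (t1 + 4))) = []"
    by (simp add: step_def tower_teacher_def)
  then obtain t2 where "halted tower_teacher ((step tower_teacher A \<sigma> ^^ t2) (?r (Suc (t1 + 4))))"
      "outp ((step tower_teacher A \<sigma> ^^ t2) (?r (Suc (t1 + 4))))
        = replicate (Suc (tower_level ?x)) ?x"
    using tower_teacher_output_loop[of "?r (Suc (t1 + 4))" "Suc (tower_level ?x)" A \<sigma>] by auto
  then have "halted tower_teacher (?r (t2 + Suc (t1 + 4)))"
    "outp (?r (t2 + Suc (t1 + 4))) = replicate (Suc (tower_level ?x)) ?x"
    by (simp_all only: run_add)
  then show ?thesis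
    using final_if_halted[of tower_teacher A \<sigma>] False by (simp add: outlist_def)
qed

lemma teacher_tower_teacher: "teacher tower_teacher"
  unfolding teacher_def
proof (intro conjI allI impI)
  fix \<sigma> \<tau> :: "nat list"
  assume "prefix \<sigma> \<tau>"
  then have "\<sigma> = [] \<or> \<tau> \<noteq> [] \<and> hd \<tau> = hd \<sigma>"
    by (metis prefix_Nil prefix_def hd_append2)
  then show "prefix (outlist tower_teacher no_oracle \<sigma>) (outlist tower_teacher no_oracle \<tau>)"
    using outlist_tower_teacher by auto
qed (use outlist_tower_teacher in \<open>auto simp: hd_in_set\<close>)

definition length_learner :: prog where
  "length_learner = [Len 0, Dec 0]"

lemma length_learner_run:
  "defined length_learner A ys \<and> steps length_learner A ys \<le> 2
   \<and> result length_learner A ys = length ys - 1 \<and> queries length_learner A ys = []"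
proof -
  have "halted length_learner (run length_learner A ys 2)"
    and "reg (run length_learner A ys 2) 0 = length ys - 1" "trans (run length_learner A ys 2) = []"
    by (simp_all add: eval_nat_numeral run_Suc step_def length_learner_def halted_def init_cfg_def)
  then show ?thesis
    using final_if_halted[of length_learner A ys 2] by (simp add: result_def queries_def)
qed

lemma tower_singletons_PRT_T: "tower_singletons \<in> PRT_T"
proof -
  let ?p = "[:5:] :: nat poly"
  have "conv_within tower_singletons length_learner no_oracle
      (\<lambda>j. outlist tower_teacher no_oracle (restr f j)) (tower_singletons n)
      (poly ?p (mi tower_singletons (tower_singletons n)))"
    if "range f = tower_singletons n" for n f
  proof -
    have "f j = tower n" for j
      using that unfolding tower_singletons_def by auto
    then have "outlist tower_teacher no_oracle (restr f j) = replicate (Suc n) (tower n)"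
      if "1 \<le> j" for j
      using that outlist_tower_teacher tower_level_tower by (cases j) (auto simp: restr_def upt_rec)
    then have "result length_learner no_oracle (outlist tower_teacher no_oracle (restr f j)) = n"
      if "1 \<le> j" for j
      using that length_learner_run by simp
    moreover have two: "steps length_learner no_oracle ys \<le> 2" for ys
      using length_learner_run by blast
    then have "(\<Sum>j\<le>1. steps length_learner no_oracle (outlist tower_teacher no_oracle (restr f j)))
        \<le> 4"
      using add_mono[OF two two] by simp
    ultimately show ?thesis
      unfolding conv_within_def mi_inj[OF inj_tower_singletons]
      by (intro exI[of _ 1]) (use length_learner_run in auto)
  qed
  then show ?thesis
    unfolding PRT_T_def using indexed_family_tower_singletons teacher_tower_teacher by blast
qed


text \<open>On the text \<open>x, x, x, \<dots>\<close> with the oracle for \<open>{x}\<close>, a register is abstracted by a pair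
  \<open>(a, b)\<close> standing for \<open>a * x + b\<close>. The abstract step \<open>aff_step\<close> does not depend on \<open>x\<close>, and
  it is exact as long as \<open>x\<close> is large compared to the coefficients, which stay bounded by
  \<open>aff_bound\<close> (\<open>aff_repr_step\<close>): then each comparison of the machine is decided by the pairs.\<close>

type_synonym aff = "nat \<times> int"

fun aff_dec :: "aff \<Rightarrow> aff" where
  "aff_dec (a, b) = (if 0 < a then (a, b - 1) else (0, max 0 (b - 1)))"

fun aff_sub :: "aff \<Rightarrow> aff \<Rightarrow> aff" where
  "aff_sub (a1, b1) (a2, b2) =
     (if a2 < a1 then (a1 - a2, b1 - b2) else if a1 < a2 then (0, 0) else (0, max 0 (b1 - b2)))"

definition aff_step :: "prog \<Rightarrow> nat \<Rightarrow> nat \<times> (nat \<Rightarrow> aff) \<Rightarrow> nat \<times> (nat \<Rightarrow> aff)" where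
  "aff_step P j pr = (let p = fst pr; G = snd pr in
     (if length P \<le> p then (p, G) else case P ! p of
       Inc r \<Rightarrow> (Suc p, G(r := (fst (G r), snd (G r) + 1)))
     | Dec r \<Rightarrow> (Suc p, G(r := aff_dec (G r)))
     | Add r s t \<Rightarrow> (Suc p, G(r := (fst (G s) + fst (G t), snd (G s) + snd (G t))))
     | Sub r s t \<Rightarrow> (Suc p, G(r := aff_sub (G s) (G t)))
     | Jz r l \<Rightarrow> (if G r = (0, 0) then l else Suc p, G)
     | Len r \<Rightarrow> (Suc p, G(r := (0, int j)))
     | Rd r s \<Rightarrow> (Suc p, G(r := (if fst (G s) = 0 \<and> snd (G s) < int j then (1, 0) else (0, 0))))
     | Out r \<Rightarrow> (Suc p, G)
     | Qry r s \<Rightarrow> (Suc p, G(r := (if G s = (1, 0) then (0, 1) else (0, 0))))))"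

definition aff_run :: "prog \<Rightarrow> nat \<Rightarrow> nat \<Rightarrow> nat \<times> (nat \<Rightarrow> aff)" where
  "aff_run P j t = (aff_step P j ^^ t) (0, \<lambda>_. (0, 0))"

definition aff_bound :: "nat \<Rightarrow> nat \<Rightarrow> int" where
  "aff_bound j t = 2 ^ t * (int j + 1)"

definition aff_bounded :: "nat \<Rightarrow> nat \<Rightarrow> (nat \<Rightarrow> aff) \<Rightarrow> bool" where
  "aff_bounded j t G \<longleftrightarrow>
     (\<forall>r. fst (G r) \<le> 2 ^ t \<and> \<bar>snd (G r)\<bar> \<le> aff_bound j t \<and> (fst (G r) = 0 \<longrightarrow> 0 \<le> snd (G r)))"

definition aff_repr :: "nat \<Rightarrow> cfg \<Rightarrow> nat \<times> (nat \<Rightarrow> aff) \<Rightarrow> bool" where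
  "aff_repr x c pr \<longleftrightarrow>
     pc c = fst pr \<and> (\<forall>r. int (reg c r) = int (fst (snd pr r)) * int x + snd (snd pr r))"

lemma aff_bound_ge_1: "1 \<le> aff_bound j t"
  unfolding aff_bound_def using mult_mono[of 1 "2 ^ t" 1 "int j + 1 :: int"] by simp

lemma aff_bound_Suc: "aff_bound j (Suc t) = 2 * aff_bound j t"
  unfolding aff_bound_def by simp

lemma less_aff_bound: "int j < aff_bound j t"
proof -
  have "int j + 1 \<le> 2 ^ t * (int j + 1)"
    using mult_right_mono[of 1 "2 ^ t" "int j + 1 :: int"] by simp
  then show ?thesis
    unfolding aff_bound_def by linarith
qed

lemma aff_bound_mono: "t \<le> T \<Longrightarrow> aff_bound j t \<le> aff_bound j T"
  unfolding aff_bound_def by (intro mult_right_mono power_increasing) auto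

lemma aff_bound_le: "j \<le> q \<Longrightarrow> t \<le> q \<Longrightarrow> aff_bound j t \<le> 2 ^ q * (int q + 1)"
  unfolding aff_bound_def by (intro mult_mono power_increasing) auto

lemma aff_bounded_step:
  assumes "aff_bounded j t G"
  shows "aff_bounded j (Suc t) (snd (aff_step P j (p, G)))"
proof -
  have B: "1 \<le> aff_bound j t" "int j < aff_bound j t"
    by (rule aff_bound_ge_1, rule less_aff_bound)
  have bounds: "fst (G r) \<le> 2 ^ t" "\<bar>snd (G r)\<bar> \<le> aff_bound j t" "fst (G r) = 0 \<Longrightarrow> 0 \<le> snd (G r)"
    for r
    using assms unfolding aff_bounded_def by auto
  have unchanged: "aff_bounded j (Suc t) G"
    unfolding aff_bounded_def
  proof
    fix r
    have "fst (G r) \<le> 2 ^ Suc t"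
      using bounds(1)[of r] by (simp add: le_trans[OF _ le_add1])
    moreover have "\<bar>snd (G r)\<bar> \<le> aff_bound j (Suc t)"
      using bounds(2)[of r] B unfolding aff_bound_Suc by linarith
    ultimately show "fst (G r) \<le> 2 ^ Suc t \<and> \<bar>snd (G r)\<bar> \<le> aff_bound j (Suc t)
        \<and> (fst (G r) = 0 \<longrightarrow> 0 \<le> snd (G r))"
      using bounds(3)[of r] by blast
  qed
  have update: "aff_bounded j (Suc t) (G(r := v))"
    if "fst v \<le> 2 ^ Suc t" "\<bar>snd v\<bar> \<le> aff_bound j (Suc t)" "fst v = 0 \<longrightarrow> 0 \<le> snd v" for r v
    using that unchanged unfolding aff_bounded_def by auto
  show ?thesis
  proof (cases "length P \<le> p")
    case True
    then show ?thesis
      using unchanged by (simp add: aff_step_def)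
  next
    case False
    note defs = False aff_step_def aff_bound_Suc
    show ?thesis
    proof (cases "P ! p")
      case (Inc r)
      then show ?thesis
        using bounds[of r] B by (auto simp: defs intro!: update)
    next
      case (Dec r)
      then show ?thesis
        using bounds[of r] B by (cases "G r") (auto simp: defs intro!: update)
    next
      case (Add r s u)
      then show ?thesis
        using bounds[of s] bounds[of u] B by (auto simp: defs intro!: update)
    next
      case (Sub r s u)
      then show ?thesis
        using bounds[of s] bounds[of u] B
        by (cases "G s"; cases "G u") (auto simp: defs intro!: update)
    next
      case (Jz r l)
      then show ?thesis
        using unchanged by (simp add: defs)
    next
      case (Out r)
      then show ?thesis
        using unchanged by (simp add: defs)
    qed (use bounds B in \<open>auto simp: defs intro!: update\<close>)
  qed
qed

lemma int_diff_max: "int (a - b) = max 0 (int a - int b)"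
  by (cases "b \<le> a") (auto simp: of_nat_diff)

lemma affine_ge:
  fixes b B X :: int
  assumes "k \<le> a" "\<bar>b\<bar> \<le> B" "0 \<le> X"
  shows "int k * X - B \<le> int a * X + b"
  using assms mult_right_mono[of "int k" "int a" X] by auto

context
  fixes v a :: nat and b B :: int and x :: nat
  assumes reg_eq: "int v = int a * int x + b" and small: "\<bar>b\<bar> \<le> B" "a = 0 \<Longrightarrow> 0 \<le> b"
    and large: "4 * B < int x"
begin

lemma affine_eq_0_iff: "v = 0 \<longleftrightarrow> (a, b) = (0, 0)"
  using reg_eq small large affine_ge[of 1 a b B "int x"] by (cases "a = 0") auto

lemma affine_eq_iff: "v = x \<longleftrightarrow> (a, b) = (1, 0)"
proof -
  consider "a = 0" | "a = 1" | "2 \<le> a"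
    by linarith
  then show ?thesis
    using reg_eq small large affine_ge[of 2 a b B "int x"] by cases auto
qed

lemma affine_less_iff: "int j < B \<Longrightarrow> v < j \<longleftrightarrow> a = 0 \<and> b < int j"
  using reg_eq small large affine_ge[of 1 a b B "int x"] by (cases "a = 0") auto

lemma affine_dec: "int (v - 1) = int (fst (aff_dec (a, b))) * int x + snd (aff_dec (a, b))"
  using reg_eq small large affine_ge[of 1 a b B "int x"] int_diff_max[of v 1]
  by (cases "a = 0") auto

lemma affine_sub:
  assumes reg_eq': "int w = int c * int x + d" and small': "\<bar>d\<bar> \<le> B"
  shows "int (v - w) = int (fst (aff_sub (a, b) (c, d))) * int x + snd (aff_sub (a, b) (c, d))"
proof -
  have diff: "int v - int w = (int a - int c) * int x + (b - d)"
    using reg_eq reg_eq' by (simp add: algebra_simps)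
  have "\<bar>b - d\<bar> \<le> 2 * B"
    using small small' by linarith
  consider "c < a" | "a < c" | "a = c"
    by linarith
  then show ?thesis
  proof cases
    case 1
    have "int x - 2 * B \<le> int v - int w"
      using diff 1 affine_ge[of 1 "a - c" "b - d" "2 * B" "int x"] \<open>\<bar>b - d\<bar> \<le> 2 * B\<close>
      by (simp add: of_nat_diff)
    then show ?thesis
      using 1 diff large small(1) int_diff_max[of v w] by (auto simp: of_nat_diff)
  next
    case 2
    then have "int w - int v = int (c - a) * int x + (d - b)"
      using diff by (simp add: of_nat_diff algebra_simps)
    then have "int x - 2 * B \<le> int w - int v"
      using 2 affine_ge[of 1 "c - a" "d - b" "2 * B" "int x"] \<open>\<bar>b - d\<bar> \<le> 2 * B\<close> by simp
    then show ?thesis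
      using 2 large small(1) int_diff_max[of v w] by auto
  next
    case 3
    then show ?thesis
      using diff int_diff_max[of v w] by auto
  qed
qed

end

lemma aff_repr_step:
  assumes bounded: "aff_bounded j t G" and repr: "aff_repr x c (p, G)"
    and large: "4 * aff_bound j t < int x"
  shows "aff_repr x (step P (\<lambda>z. z = x) (replicate j x) c) (aff_step P j (p, G))"
proof -
  have reg_eq: "int (reg c r) = int (fst (G r)) * int x + snd (G r)" for r
    using repr by (simp add: aff_repr_def)
  have small: "\<bar>snd (G r)\<bar> \<le> aff_bound j t" "fst (G r) = 0 \<Longrightarrow> 0 \<le> snd (G r)" for r
    using bounded by (auto simp: aff_bounded_def)
  have pc: "pc c = p"
    using repr by (simp add: aff_repr_def)
  have update: "aff_repr x (c\<lparr>pc := Suc p, reg := (reg c)(r := v)\<rparr>) (Suc p, G(r := w))"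
    if "int v = int (fst w) * int x + snd w" for r v w
    using repr that by (simp add: aff_repr_def)
  show ?thesis
  proof (cases "length P \<le> p")
    case True
    then show ?thesis
      using repr pc by (simp add: aff_step_def step_def)
  next
    case False
    note defs = False pc aff_step_def step_def
    show ?thesis
    proof (cases "P ! p")
      case (Inc r)
      then show ?thesis
        using update[of "reg c r + 1" "(fst (G r), snd (G r) + 1)" r] reg_eq[of r]
        by (simp add: defs)
    next
      case (Dec r)
      then show ?thesis
        using update[of "reg c r - 1" "aff_dec (G r)" r] affine_dec[OF reg_eq[of r] small[of r] large]
        by (simp add: defs)
    next
      case (Add r s u)
      then show ?thesis
        using update[of "reg c s + reg c u" "(fst (G s) + fst (G u), snd (G s) + snd (G u))" r]
          reg_eq[of s] reg_eq[of u] by (simp add: defs algebra_simps)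
    next
      case (Sub r s u)
      then show ?thesis
        using update[of "reg c s - reg c u" "aff_sub (G s) (G u)" r]
          affine_sub[OF reg_eq[of s] small[of s] large reg_eq[of u] small(1)[of u]]
          by (simp add: defs)
    next
      case (Jz r l)
      then show ?thesis
        using repr affine_eq_0_iff[OF reg_eq[of r] small[of r] large]
        by (simp add: defs aff_repr_def)
    next
      case (Len r)
      then show ?thesis
        using update[of "j" "(0, int j)" r] by (simp add: defs)
    next
      case (Rd r s)
      let ?w = "if fst (G s) = 0 \<and> snd (G s) < int j then (1, 0) else (0, 0)"
      have cond: "reg c s < j \<longleftrightarrow> fst (G s) = 0 \<and> snd (G s) < int j"
        using affine_less_iff[OF reg_eq[of s] small[of s] large less_aff_bound] by simp
      then have "int (if reg c s < j then x else 0) = int (fst ?w) * int x + snd ?w"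
        by simp
      then have "aff_repr x (c\<lparr>pc := Suc p, reg := (reg c)(r := if reg c s < j then x else 0)\<rparr>)
          (Suc p, G(r := ?w))"
        by (rule update)
      with Rd show ?thesis
        by (simp add: defs flip: cond split del: if_split cong: if_cong)
    next
      case (Out r)
      then show ?thesis
        using repr by (simp add: defs aff_repr_def)
    next
      case (Qry r s)
      have "reg c s = x \<longleftrightarrow> G s = (1, 0)"
        using affine_eq_iff[OF reg_eq[of s] small[of s] large] by simp
      then show ?thesis
        using Qry update[of "if reg c s = x then 1 else 0" "if G s = (1, 0) then (0, 1) else (0, 0)" r]
        by (simp add: defs aff_repr_def)
    qed
  qed
qed

lemma aff_repr_run:
  assumes "4 * aff_bound j T < int x" and "t \<le> T"
  shows "aff_repr x (run P (\<lambda>z. z = x) (replicate j x) t) (aff_run P j t)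
    \<and> aff_bounded j t (snd (aff_run P j t))"
  using assms(2)
proof (induction t)
  case 0
  show ?case
    by (simp add: aff_run_def aff_repr_def aff_bounded_def init_cfg_def aff_bound_def)
next
  case (Suc t)
  then have repr: "aff_repr x (run P (\<lambda>z. z = x) (replicate j x) t)
      (fst (aff_run P j t), snd (aff_run P j t))"
    and bounded: "aff_bounded j t (snd (aff_run P j t))"
    by auto
  have "4 * aff_bound j t < int x"
    using aff_bound_mono[of t T j] Suc.prems assms(1) by linarith
  moreover have "aff_run P j (Suc t) = aff_step P j (fst (aff_run P j t), snd (aff_run P j t))"
    by (simp add: aff_run_def)
  ultimately show ?case
    using aff_repr_step[OF bounded repr, of P] aff_bounded_step[OF bounded, of P "fst (aff_run P j t)"]
    by (simp add: run_Suc)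
qed

lemma result_affine:
  assumes "4 * aff_bound j s < int x" and "4 * aff_bound j s < int y"
    and halt: "halted P (run P (\<lambda>z. z = x) (replicate j x) s)"
  obtains a b where "int (result P (\<lambda>z. z = x) (replicate j x)) = int a * int x + b"
    and "int (result P (\<lambda>z. z = y) (replicate j y)) = int a * int y + b"
proof -
  have repr_x: "aff_repr x (run P (\<lambda>z. z = x) (replicate j x) s) (aff_run P j s)"
    and repr_y: "aff_repr y (run P (\<lambda>z. z = y) (replicate j y) s) (aff_run P j s)"
    using aff_repr_run[OF assms(1) le_refl] aff_repr_run[OF assms(2) le_refl] by simp_all
  then have "halted P (run P (\<lambda>z. z = y) (replicate j y) s)"
    using halt by (simp add: aff_repr_def halted_def)
  then show ?thesis
    using that repr_x repr_y final_if_halted(1)[OF halt] final_if_halted(1)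
    by (simp add: aff_repr_def result_def)
qed

lemma poly_bound: "\<exists>K\<ge>1. \<forall>x. poly p x \<le> K * (x + 1) ^ K" for p :: "nat poly"
proof (induction p rule: pCons_induct)
  case 0 then show ?case by (intro exI[of _ 1]) simp
next
  case (pCons a p)
  then obtain K where K: "K \<ge> 1" "\<And>x. poly p x \<le> K * (x + 1) ^ K" by blast
  let ?K = "a + K + 1"
  have "poly (pCons a p) x \<le> ?K * (x + 1) ^ ?K" for x
  proof -
    have e1: "(x + 1) ^ (K + 1) \<le> (x + 1) ^ ?K" by (rule power_increasing) auto
    have e2: "1 \<le> (x + 1) ^ ?K" using one_le_power[of "x + 1" ?K] by simp
    have "poly (pCons a p) x = a + x * poly p x" by simp
    also have "\<dots> \<le> a + x * (K * (x + 1) ^ K)" using K(2)[of x] by (simp add: mult_left_mono)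
    also have "\<dots> \<le> a + K * (x + 1) ^ (K + 1)" by (simp add: algebra_simps mult_right_mono)
    also have "\<dots> \<le> a * (x + 1) ^ ?K + K * (x + 1) ^ ?K"
      using e1 e2 by (intro add_mono) (simp_all add: mult_left_mono)
    also have "\<dots> \<le> ?K * (x + 1) ^ ?K" by (simp add: algebra_simps)
    finally show ?thesis .
  qed
  then show ?case by (intro exI[of _ ?K]) auto
qed

lemma poly_mono_nat: "m \<le> n \<Longrightarrow> poly p m \<le> poly p n" for p :: "nat poly"
proof (induction p rule: pCons_induct)
  case 0 then show ?case by simp
next
  case (pCons a p)
  then show ?case by (simp add: mult_mono)
qed

lemma sq_le_power_2: "(u + 1) ^ 2 \<le> (2::nat) ^ (2 * u)"
proof -
  have "u + 1 \<le> 2 ^ u"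
    by (simp add: Suc_le_eq)
  then have "(u + 1) ^ 2 \<le> (2 ^ u) ^ 2"
    by (rule power_mono) simp
  then show ?thesis
    by (simp add: power_mult[symmetric] mult.commute)
qed

lemma mult_power_2_le: "4 * 2 ^ q * (q + 1) \<le> (2::nat) ^ (2 * q + 2)"
proof -
  have "q + 1 \<le> 2 ^ q"
    by (simp add: Suc_le_eq)
  then have "4 * 2 ^ q * (q + 1) \<le> 4 * 2 ^ q * 2 ^ q"
    by (rule mult_left_mono) simp
  also have "\<dots> = 2 ^ (2 * q + 2)"
    by (simp add: power_add mult_2 power_Suc)
  finally show ?thesis .
qed

text \<open>With \<open>poly p x \<le> K * (x + 1) ^ K\<close>, the left-hand side is at most
  \<open>2 ^ (2 * K + 2 + (L + 5) * K)\<close>, and \<open>tower (L + 2) \<ge> 2 ^ 2 ^ (L + 1)\<close>. Choosing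
  \<open>L + 1 = 2 * (2 * K + 8)\<close> makes \<open>2 ^ (L + 1) \<ge> (2 * K + 9) ^ 2\<close> exceed that exponent.\<close>

lemma poly_less_tower: "\<exists>L. 2 * poly p (L + 4) + 2 < tower (L + 2)" for p :: "nat poly"
proof -
  obtain K where "1 \<le> K" and K: "\<And>x. poly p x \<le> K * (x + 1) ^ K"
    using poly_bound by blast
  define u where "u = 2 * K + 8"
  define L where "L = 2 * u - 1"
  have "L + 1 = 2 * u"
    unfolding L_def u_def by simp
  have "2 * poly p (L + 4) + 2 \<le> (2 * K + 2) * (L + 5) ^ K"
  proof -
    have "poly p (L + 4) \<le> K * (L + 5) ^ K"
      using K[of "L + 4"] by (simp add: add.commute)
    moreover have "1 \<le> (L + 5) ^ K"
      by simp
    moreover have "(2 * K + 2) * (L + 5) ^ K = 2 * (K * (L + 5) ^ K) + 2 * (L + 5) ^ K"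
      by (simp add: algebra_simps)
    ultimately show ?thesis
      by linarith
  qed
  also have "\<dots> \<le> 2 ^ (2 * K + 2) * 2 ^ ((L + 5) * K)"
  proof (rule mult_le_mono)
    show "2 * K + 2 \<le> 2 ^ (2 * K + 2)"
      using less_exp[of "2 * K + 2"] by linarith
    have "L + 5 \<le> 2 ^ (L + 5)"
      using less_exp[of "L + 5"] by linarith
    then have "(L + 5) ^ K \<le> (2 ^ (L + 5)) ^ K"
      by (rule power_mono) simp
    then show "(L + 5) ^ K \<le> 2 ^ ((L + 5) * K)"
      by (simp add: power_mult)
  qed
  also have "\<dots> = 2 ^ (2 * K + 2 + (L + 5) * K)"
    by (simp add: power_add)
  also have "\<dots> < 2 ^ tower (L + 1)"
  proof (rule power_strict_increasing)
    have "2 * K + 2 + (L + 5) * K < (u + 1) ^ 2"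
      unfolding L_def u_def by (simp add: power2_eq_square algebra_simps)
    also have "\<dots> \<le> 2 ^ (L + 1)"
      using sq_le_power_2[of u] \<open>L + 1 = 2 * u\<close> by simp
    also have "\<dots> \<le> 2 ^ tower L"
      using less_tower[of L] by (intro power_increasing) simp_all
    finally show "2 * K + 2 + (L + 5) * K < tower (L + 1)"
      by simp
  qed simp
  finally show ?thesis
    by auto
qed

lemma tower_beats_poly:
  "\<exists>N\<ge>1. 4 * 2 ^ poly p (N + 1) * (poly p (N + 1) + 1) < tower N" for p :: "nat poly"
proof -
  obtain L where "2 * poly p (L + 4) + 2 < tower (L + 2)"
    using poly_less_tower by blast
  then have "(2::nat) ^ (2 * poly p (L + 4) + 2) < 2 ^ tower (L + 2)"
    by (rule power_strict_increasing) simp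
  also have "\<dots> = tower (L + 3)"
    by (simp add: numeral_3_eq_3 numeral_2_eq_2)
  finally have less: "4 * 2 ^ poly p (L + 4) * (poly p (L + 4) + 1) < tower (L + 3)"
    using mult_power_2_le[of "poly p (L + 4)"] by linarith
  show ?thesis
  proof (intro exI conjI)
    show "1 \<le> L + 3"
      by simp
    have "L + 3 + 1 = L + 4"
      by simp
    then show "4 * 2 ^ poly p (L + 3 + 1) * (poly p (L + 3 + 1) + 1) < tower (L + 3)"
      using less by (simp only:)
  qed
qed

lemma restr_const: "restr (\<lambda>_. c) = (\<lambda>j. replicate j c)"
  by (simp add: fun_eq_iff restr_def map_replicate_const)

lemma affine_values_gap:
  fixes a :: nat and b X Y :: int
  assumes "int N = int a * X + b" "int (N + 1) = int a * Y + b" "X + 2 \<le> Y"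
  shows False
proof -
  have "int a * (Y - X) = 1"
    using assms(1,2) by (simp add: algebra_simps)
  moreover have "2 \<le> int a * (Y - X)" if "a \<noteq> 0"
    using that assms(3) mult_mono[of 1 "int a" 2 "Y - X"] by simp
  ultimately show False
    by (cases "a = 0") auto
qed

lemma tower_singletons_PRT_O_learner:
  assumes "tower_singletons \<in> PRT_O"
  obtains M I p where "\<And>n j. defined M (\<lambda>z. z = tower n) (replicate j (tower n))"
    and "\<And>n j. I n \<le> j \<Longrightarrow> result M (\<lambda>z. z = tower n) (replicate j (tower n)) = n"
    and "\<And>n. I n < poly p n"
    and "\<And>n. steps M (\<lambda>z. z = tower n) (replicate (I n) (tower n)) < poly p n"
proof -
  obtain M p where learns: "\<forall>n f. range f = tower_singletons n \<longrightarrow>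
      conv_within tower_singletons M (\<lambda>x. x \<in> tower_singletons n) (restr f) (tower_singletons n)
        (poly p (mi tower_singletons (tower_singletons n)))"
    using assms unfolding PRT_O_def by blast
  have "\<exists>i. (\<forall>j. defined M (\<lambda>z. z = tower n) (replicate j (tower n)))
      \<and> (\<forall>j\<ge>i. result M (\<lambda>z. z = tower n) (replicate j (tower n)) = n)
      \<and> (\<Sum>j\<le>i. steps M (\<lambda>z. z = tower n) (replicate j (tower n))) < poly p n" for n
  proof -
    have "range (\<lambda>_. tower n) = tower_singletons n"
      by (simp add: tower_singletons_def)
    then have "conv_within tower_singletons M (\<lambda>z. z = tower n) (\<lambda>j. replicate j (tower n))
        (tower_singletons n) (poly p n)"
      using learns[rule_format, of "\<lambda>_. tower n" n] unfolding mi_inj[OF inj_tower_singletons]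
      by (simp add: restr_const tower_singletons_def)
    then show ?thesis
      unfolding conv_within_def using injD[OF inj_tower_singletons] by metis
  qed
  then obtain I where I: "\<And>n. (\<forall>j. defined M (\<lambda>z. z = tower n) (replicate j (tower n)))
      \<and> (\<forall>j\<ge>I n. result M (\<lambda>z. z = tower n) (replicate j (tower n)) = n)
      \<and> (\<Sum>j\<le>I n. steps M (\<lambda>z. z = tower n) (replicate j (tower n))) < poly p n"
    by metis
  have "M \<noteq> []"
    using I[of 1] result_Nil by fastforce
  have "I n < poly p n" for n
  proof -
    have "(\<Sum>j\<le>I n. 1) \<le> (\<Sum>j\<le>I n. steps M (\<lambda>z. z = tower n) (replicate j (tower n)))"
      by (rule sum_mono) (use I steps_ge_1[OF \<open>M \<noteq> []\<close>] in blast)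
    then show ?thesis
      using I[of n] by simp
  qed
  moreover have "steps M (\<lambda>z. z = tower n) (replicate (I n) (tower n)) < poly p n" for n
    using member_le_sum[of "I n" "{..I n}" "\<lambda>j. steps M (\<lambda>z. z = tower n) (replicate j (tower n))"]
      I[of n] by simp
  ultimately show ?thesis
    using I by (intro that[where M = M and I = I and p = p]) blast+
qed

text \<open>The learner must tell \<open>tower N\<close> from \<open>tower (N + 1)\<close> after a number of steps and input
  length below \<open>q\<close>, while both values exceed \<open>4 * 2 ^ q * (q + 1)\<close>; so its two answers are
  values of one affine function at these points.\<close>

lemma tower_singletons_not_PRT_O: "tower_singletons \<notin> PRT_O"
proof
  assume "tower_singletons \<in> PRT_O"
  then obtain M I p where defined: "\<And>n j. defined M (\<lambda>z. z = tower n) (replicate j (tower n))"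
    and result: "\<And>n j. I n \<le> j \<Longrightarrow> result M (\<lambda>z. z = tower n) (replicate j (tower n)) = n"
    and I_less: "\<And>n. I n < poly p n"
    and steps_less: "\<And>n. steps M (\<lambda>z. z = tower n) (replicate (I n) (tower n)) < poly p n"
    using tower_singletons_PRT_O_learner by blast
  obtain N where "1 \<le> N" and large: "4 * 2 ^ poly p (N + 1) * (poly p (N + 1) + 1) < tower N"
    using tower_beats_poly by blast
  let ?q = "poly p (N + 1)"
  have gap: "tower N + 2 \<le> tower (N + 1)"
    using tower_gap[OF \<open>1 \<le> N\<close>] by simp
  have "int (4 * 2 ^ ?q * (?q + 1)) < int (tower N)"
    using large by linarith
  then have "4 * (2 ^ ?q * (int ?q + 1)) < int (tower N)"
    by (simp add: algebra_simps)
  have separated: False if wv: "w = N \<and> v = N + 1 \<or> w = N + 1 \<and> v = N" and "I v \<le> I w" for w v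
  proof -
    let ?j = "I w" and ?s = "steps M (\<lambda>z. z = tower w) (replicate (I w) (tower w))"
    have "?j \<le> ?q" "?s \<le> ?q"
      using I_less[of w] steps_less[of w] poly_mono_nat[of N "N + 1" p] wv by auto
    then have "4 * aff_bound ?j ?s \<le> 4 * (2 ^ ?q * (int ?q + 1))"
      using aff_bound_le by simp
    moreover have "int (tower N) \<le> int (tower w)" "int (tower N) \<le> int (tower v)"
      using gap wv by auto
    ultimately have "4 * aff_bound ?j ?s < int (tower w)" "4 * aff_bound ?j ?s < int (tower v)"
      using \<open>4 * (2 ^ ?q * (int ?q + 1)) < int (tower N)\<close> by linarith+
    moreover have "halted M (run M (\<lambda>z. z = tower w) (replicate ?j (tower w)) ?s)"
      using halted_final[OF defined] by (simp add: final_def)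
    ultimately obtain a b where
      "int (result M (\<lambda>z. z = tower w) (replicate ?j (tower w))) = int a * int (tower w) + b"
      "int (result M (\<lambda>z. z = tower v) (replicate ?j (tower v))) = int a * int (tower v) + b"
      using result_affine by blast
    then have "int N = int a * int (tower N) + b" "int (N + 1) = int a * int (tower (N + 1)) + b"
      using result[of w ?j] result[of v ?j] \<open>I v \<le> I w\<close> wv by auto
    moreover have "int (tower N) + 2 \<le> int (tower (N + 1))"
      using gap by linarith
    ultimately show False
      by (rule affine_values_gap)
  qed
  show False
    using separated[of "N + 1" N] separated[of N "N + 1"] by (cases "I N \<le> I (N + 1)") simp_all
qed

theorem theorem3p11:
  shows "(PRT \<subset> PRT_O \<and> PRT_O \<subset> PRT_TO)
       \<and> (PRT \<subset> PRT_T \<and> PRT_T \<subset> PRT_TO)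
       \<and> PRT_O - PRT_T \<noteq> {}
       \<and> PRT_T - PRT_O \<noteq> {}"
proof -
  have "cosingletons \<in> PRT_O - PRT_T"
    using cosingletons_PRT_O cosingletons_not_PRT_T by blast
  moreover have "tower_singletons \<in> PRT_T - PRT_O"
    using tower_singletons_PRT_T tower_singletons_not_PRT_O by blast
  ultimately show ?thesis
    using PRT_subset_PRT_O PRT_subset_PRT_T PRT_O_subset_PRT_TO PRT_T_subset_PRT_TO by blast
qed

end
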